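(* Let $\Omega\subset\mathbb R^n$ be a bounded open set with $C^2$ boundary and let $u:\overline\Omega\to\mathbb R$ be Lipschitz continuous and semiconcave with modulus $\omega$ in $\overline\Omega$. Let $x\in\partial\Omega$ and let $\nu(x)$ be the outward unit normal to $\partial\Omega$ at $x$. Then for every $\theta\in\mathbb R^n$ with $\langle\theta,\nu(x)\rangle\le0$, $$\partial^\uparrow u(x;\theta)=\min_{p\in D^+u(x)}\langle p,\theta\rangle=\partial^\downarrow u(x;\theta).$$
   Context: A modulus is a nondecreasing upper semicontinuous $\omega:\mathbb R_+\to\mathbb R_+$ with $\omega(r)\to0$ as $r\to0^+$. $u$ is semiconcave with modulus $\omega$ on $\overline\Omega$ if $\lambda u(x)+(1-\lambda)u(y)-u(\lambda x+(1-\lambda)y)\le\lambda(1-\lambda)|x-y|\omega(|x-y|)$ for all $x,y\in\overline\Omega$ with $[x,y]\subset\overline\Omega$ and all $\lambda\in[0,1]$. $D^+u(x)=\{p:\limsup_{y\to x,\,y\in\overline\Omega}\frac{u(y)-u(x)-\langle p,y-x\rangle}{|y-x|}\le0\}$. Upper and lower Dini derivatives: $\partial^\uparrow u(x;\theta)=\limsup\frac{u(x+h\theta')-u(x)}{h}$ and $\partial^\downarrow u(x;\theta)=\liminf\frac{u(x+h\theta')-u(x)}{h}$, both taken as $h\to0^+$, $\theta'\to\theta$ with $x+h\theta'\in\overline\Omega$. *)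

theory Defs
  imports "HOL-Analysis.Analysis" "HOL-Library.Liminf_Limsup"
begin

definition usc_on :: "real set \<Rightarrow> (real \<Rightarrow> real) \<Rightarrow> bool" where
  "usc_on S f \<longleftrightarrow> (\<forall>t\<in>S. \<forall>e>0. \<exists>d>0. \<forall>s\<in>S. \<bar>s - t\<bar> < d \<longrightarrow> f s < f t + e)"

definition modulus :: "(real \<Rightarrow> real) \<Rightarrow> bool" where
  "modulus \<omega> \<longleftrightarrow> mono_on {0..} \<omega> \<and> usc_on {0..} \<omega> \<and> (\<forall>r\<ge>0. \<omega> r \<ge> 0)
     \<and> (\<omega> \<longlongrightarrow> 0) (at_right 0)"

definition semiconcave_with :: "('a::euclidean_space) set \<Rightarrow> (real \<Rightarrow> real) \<Rightarrow> ('a \<Rightarrow> real) \<Rightarrow> bool" where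
  "semiconcave_with K \<omega> u \<longleftrightarrow>
     (\<forall>x\<in>K. \<forall>y\<in>K. closed_segment x y \<subseteq> K \<longrightarrow> (\<forall>l\<in>{0..1::real}.
        l * u x + (1 - l) * u y - u (l *\<^sub>R x + (1 - l) *\<^sub>R y)
          \<le> l * (1 - l) * norm (x - y) * \<omega> (norm (x - y))))"

definition superdiff :: "('a::euclidean_space) set \<Rightarrow> ('a \<Rightarrow> real) \<Rightarrow> 'a \<Rightarrow> 'a set" where
  "superdiff K u x = {p. Limsup (at x within K)
       (\<lambda>y. ereal ((u y - u x - inner p (y - x)) / norm (y - x))) \<le> 0}"

definition dini_filter :: "('a::euclidean_space) set \<Rightarrow> 'a \<Rightarrow> 'a \<Rightarrow> (real \<times> 'a) filter" where
  "dini_filter K x \<theta> = inf (at_right 0 \<times>\<^sub>F nhds \<theta>) (principal {(h, \<theta>'). x + h *\<^sub>R \<theta>' \<in> K})"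

definition dini_upper :: "('a::euclidean_space) set \<Rightarrow> ('a \<Rightarrow> real) \<Rightarrow> 'a \<Rightarrow> 'a \<Rightarrow> ereal" where
  "dini_upper K u x \<theta> = Limsup (dini_filter K x \<theta>)
      (\<lambda>(h, \<theta>'). ereal ((u (x + h *\<^sub>R \<theta>') - u x) / h))"

definition dini_lower :: "('a::euclidean_space) set \<Rightarrow> ('a \<Rightarrow> real) \<Rightarrow> 'a \<Rightarrow> 'a \<Rightarrow> ereal" where
  "dini_lower K u x \<theta> = Liminf (dini_filter K x \<theta>)
      (\<lambda>(h, \<theta>'). ereal ((u (x + h *\<^sub>R \<theta>') - u x) / h))"

definition C2_on :: "('a::euclidean_space) set \<Rightarrow> ('a \<Rightarrow> real) \<Rightarrow> ('a \<Rightarrow> 'a) \<Rightarrow> bool" where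
  "C2_on S \<psi> g \<longleftrightarrow> (\<exists>H :: 'a \<Rightarrow> ('a \<Rightarrow>\<^sub>L 'a).
      (\<forall>y\<in>S. (\<psi> has_derivative (\<lambda>v. inner (g y) v)) (at y))
    \<and> (\<forall>y\<in>S. (g has_derivative blinfun_apply (H y)) (at y))
    \<and> continuous_on S H)"

definition local_defining_fun ::
    "('a::euclidean_space) set \<Rightarrow> 'a \<Rightarrow> real \<Rightarrow> ('a \<Rightarrow> real) \<Rightarrow> ('a \<Rightarrow> 'a) \<Rightarrow> bool" where
  "local_defining_fun \<Omega> x r \<psi> g \<longleftrightarrow> r > 0 \<and> C2_on (ball x r) \<psi> g
     \<and> (\<forall>y\<in>ball x r. g y \<noteq> 0) \<and> \<Omega> \<inter> ball x r = {y \<in> ball x r. \<psi> y < 0}"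

definition C2_boundary :: "('a::euclidean_space) set \<Rightarrow> bool" where
  "C2_boundary \<Omega> \<longleftrightarrow> (\<forall>x\<in>frontier \<Omega>. \<exists>r \<psi> g. local_defining_fun \<Omega> x r \<psi> g)"

definition outward_unit_normal :: "('a::euclidean_space) set \<Rightarrow> 'a \<Rightarrow> 'a \<Rightarrow> bool" where
  "outward_unit_normal \<Omega> x \<nu> \<longleftrightarrow>
     (\<exists>r \<psi> g. local_defining_fun \<Omega> x r \<psi> g \<and> \<nu> = g x /\<^sub>R norm (g x))"

end

theory Submission
  imports Defs
begin

text \<open>
  At a boundary point \<open>x\<close> of a \<open>C\<^sup>2\<close> domain, \<open>\<Omega>\<close> is tangent to the half-space
  \<open>\<langle>\<nu>, y - x\<rangle> \<le> 0\<close>: it contains a truncation of every cone around an inward direction and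
  lies, near \<open>x\<close>, inside every cone \<open>\<langle>\<nu>, y - x\<rangle> \<le> \<epsilon> |y - x|\<close>.
  For an inward direction \<open>w\<close> (\<open>\<langle>\<nu>, w\<rangle> < 0\<close>) semiconcavity makes the difference quotients of
  \<open>u\<close> almost monotone, so the one-sided directional derivative \<open>d w\<close> exists; on the open inward
  cone \<open>d\<close> is \<open>L\<close>-Lipschitz, positively homogeneous and concave. Its McShane extension \<open>F\<close>
  to all directions is still concave, with \<open>F 0 \<ge> 0\<close> and \<open>F (2 v) \<ge> 2 F v\<close>, so a supergradient
  \<open>p\<close> of \<open>F\<close> at \<open>\<theta>\<close> gives a linear majorant \<open>\<langle>p, \<cdot>\<rangle>\<close> of \<open>F\<close> touching it at \<open>\<theta>\<close>.
  Flatness of the boundary turns \<open>d \<le> \<langle>p, \<cdot>\<rangle>\<close> into \<open>p \<in> D\<^sup>+u(x)\<close>. Approximating \<open>\<theta>\<close>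
  by the inward directions \<open>\<theta> - k\<nu>\<close> shows that the lower Dini derivative is at least
  \<open>F \<theta> = \<langle>p, \<theta>\<rangle>\<close>, while every \<open>q \<in> D\<^sup>+u(x)\<close> bounds the upper Dini derivative by
  \<open>\<langle>q, \<theta>\<rangle>\<close>; so everything coincides and \<open>p\<close> attains the minimum.
\<close>

lemma exists_small_factor:
  fixes C e :: real
  assumes "0 \<le> C" and "0 < e"
  obtains k where "0 < k" and "k \<le> 1" and "k * C \<le> e"
proof
  show "0 < min 1 (e / (C + 1))" and "min 1 (e / (C + 1)) \<le> 1"
    using assms by simp_all
  have "min 1 (e / (C + 1)) * C \<le> e / (C + 1) * C"
    using assms by (intro mult_right_mono) auto
  also have "\<dots> \<le> e"
    using assms by (simp add: field_simps)
  finally show "min 1 (e / (C + 1)) * C \<le> e" .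
qed

lemma tendsto_at_right_0_almost_antimono:
  fixes f c :: "real \<Rightarrow> real"
  assumes "h0 > 0" and bounded: "\<And>h. 0 < h \<Longrightarrow> h \<le> h0 \<Longrightarrow> f h \<le> B"
    and c: "(c \<longlongrightarrow> 0) (at_right 0)"
    and almost_antimono: "\<And>s h. 0 < s \<Longrightarrow> s \<le> h \<Longrightarrow> h \<le> h0 \<Longrightarrow> f h - c h \<le> f s"
  shows "\<exists>l. (f \<longlongrightarrow> l) (at_right 0) \<and> (\<forall>h. 0 < h \<and> h \<le> h0 \<longrightarrow> f h - c h \<le> l)"
proof -
  define T where "T = (\<lambda>h. f h - c h) ` {0<..h0}"
  have "T \<noteq> {}" using \<open>h0 > 0\<close> by (auto simp: T_def)
  have "bdd_above T"
    unfolding T_def bdd_above_def using bounded almost_antimono by (intro exI[of _ B]) force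
  have upper: "f h - c h \<le> Sup T" if "0 < h" "h \<le> h0" for h
    using that \<open>bdd_above T\<close> by (intro cSup_upper) (auto simp: T_def)
  have "(f \<longlongrightarrow> Sup T) (at_right 0)"
  proof (rule tendstoI)
    fix e :: real assume "e > 0"
    have "Sup T - e < Sup T" using \<open>e > 0\<close> by simp
    then obtain t where "t \<in> T" "Sup T - e < t"
      using \<open>T \<noteq> {}\<close> by (meson less_cSupE)
    then obtain h1 where h1: "0 < h1" "h1 \<le> h0" "Sup T - e < f h1 - c h1"
      by (auto simp: T_def)
    have "eventually (\<lambda>s. dist (c s) 0 < e) (at_right 0)" using c \<open>e > 0\<close> by (rule tendstoD)
    moreover have "eventually (\<lambda>s. s \<in> {0<..<h1}) (at_right 0)"
      using h1 by (intro eventually_at_right_real) auto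
    ultimately show "eventually (\<lambda>s. dist (f s) (Sup T) < e) (at_right 0)"
    proof eventually_elim
      case (elim s)
      then have "Sup T - e < f s" using almost_antimono[of s h1] h1 by auto
      moreover have "f s - c s \<le> Sup T" using upper[of s] elim h1 by auto
      ultimately show ?case using elim by (auto simp: dist_real_def abs_less_iff)
    qed
  qed
  then show ?thesis using upper by blast
qed

lemma modulus_nonneg: "modulus \<omega> \<Longrightarrow> 0 \<le> r \<Longrightarrow> 0 \<le> \<omega> r"
  by (simp add: modulus_def)

lemma modulus_scaled_tendsto_0:
  assumes "modulus \<omega>" and "c \<ge> 0"
  shows "((\<lambda>h. c * \<omega> (h * c)) \<longlongrightarrow> 0) (at_right 0)"
proof (cases "c = 0")
  case False
  then have "filterlim (\<lambda>h. h * c) (at_right 0) (at_right 0)"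
    using assms(2) filterlim_times_pos[OF filterlim_ident, of c "0::real"] by (simp add: mult.commute)
  moreover have "(\<omega> \<longlongrightarrow> 0) (at_right 0)"
    using assms(1) by (simp add: modulus_def)
  ultimately have "((\<lambda>h. \<omega> (h * c)) \<longlongrightarrow> 0) (at_right 0)"
    by (rule filterlim_compose[rotated])
  then show ?thesis by (rule tendsto_mult_right_zero)
qed simp

lemma modulus_uniformly_small:
  assumes "modulus \<omega>" and "R > 0" and "e > 0"
  obtains \<delta> where "\<delta> > 0"
    and "\<And>h (v :: 'a::real_normed_vector). 0 < h \<Longrightarrow> h < \<delta> \<Longrightarrow> norm v \<le> R \<Longrightarrow> norm v * \<omega> (h * norm v) \<le> e"
proof -
  have "(\<omega> \<longlongrightarrow> 0) (at_right 0)"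
    using assms(1) by (simp add: modulus_def)
  then have "\<forall>\<^sub>F s in at_right 0. \<omega> s < e / R"
    by (rule order_tendstoD(2)) (use assms(2,3) in simp)
  then obtain s where "s > 0" and s: "\<And>r. 0 < r \<Longrightarrow> r < s \<Longrightarrow> \<omega> r < e / R"
    unfolding eventually_at_right_field by auto
  have "norm v * \<omega> (h * norm v) \<le> e" if "0 < h" "h < s / R" "norm v \<le> R" for h and v :: 'a
  proof (cases "v = 0")
    case False
    have "h * norm v \<le> h * R"
      using that by (simp add: mult_left_mono)
    also have "\<dots> < s"
      using that assms(2) by (simp add: less_divide_eq)
    finally have "\<omega> (h * norm v) < e / R"
      using s False \<open>0 < h\<close> by simp
    then have "norm v * \<omega> (h * norm v) \<le> R * (e / R)"
      using that assms(2) modulus_nonneg[OF assms(1), of "h * norm v"] by (intro mult_mono) auto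
    then show ?thesis
      using assms(2) by simp
  qed (use assms(3) in simp)
  moreover have "s / R > 0"
    using \<open>s > 0\<close> assms(2) by simp
  ultimately show ?thesis
    using that by blast
qed

section \<open>Directional derivatives of semiconcave functions\<close>

definition diff_quot :: "('a::real_vector \<Rightarrow> real) \<Rightarrow> 'a \<Rightarrow> real \<Rightarrow> 'a \<Rightarrow> real" where
  "diff_quot u x h v = (u (x + h *\<^sub>R v) - u x) / h"

definition dir_deriv :: "('a::real_vector \<Rightarrow> real) \<Rightarrow> 'a \<Rightarrow> 'a \<Rightarrow> real" where
  "dir_deriv u x v = Lim (at_right 0) (\<lambda>h. diff_quot u x h v)"

lemma dir_deriv_eqI: "((\<lambda>h. diff_quot u x h v) \<longlongrightarrow> l) (at_right 0) \<Longrightarrow> dir_deriv u x v = l"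
  unfolding dir_deriv_def by (rule tendsto_Lim) simp

lemma diff_quot_mult: "h \<noteq> 0 \<Longrightarrow> h * diff_quot u x h v = u (x + h *\<^sub>R v) - u x"
  by (simp add: diff_quot_def)

lemma diff_quot_lipschitz:
  assumes "L-lipschitz_on K u" and "h > 0" and "x + h *\<^sub>R v \<in> K" and "x + h *\<^sub>R w \<in> K"
  shows "\<bar>diff_quot u x h v - diff_quot u x h w\<bar> \<le> L * norm (v - w)"
proof -
  have "\<bar>u (x + h *\<^sub>R v) - u (x + h *\<^sub>R w)\<bar> \<le> L * dist (x + h *\<^sub>R v) (x + h *\<^sub>R w)"
    using lipschitz_onD[OF assms(1,3,4)] by (simp add: dist_real_def)
  also have "\<dots> = h * (L * norm (v - w))"
    using \<open>h > 0\<close> by (simp add: dist_norm flip: scaleR_diff_right)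
  finally show ?thesis
    using \<open>h > 0\<close> by (simp add: diff_quot_def divide_le_eq mult.commute
        flip: diff_divide_distrib)
qed

lemma diff_quot_bound:
  assumes "L-lipschitz_on K u" and "h > 0" and "x \<in> K" and "x + h *\<^sub>R v \<in> K"
  shows "\<bar>diff_quot u x h v\<bar> \<le> L * norm v"
  using diff_quot_lipschitz[OF assms(1,2) assms(4), of 0] assms(3) by (simp add: diff_quot_def)

lemma tendsto_diff_quot_scaleR:
  assumes "((\<lambda>h. diff_quot u x h v) \<longlongrightarrow> l) (at_right 0)" and "c > 0"
  shows "((\<lambda>h. diff_quot u x h (c *\<^sub>R v)) \<longlongrightarrow> c * l) (at_right 0)"
proof -
  have "filterlim (\<lambda>h. c * h) (at_right 0) (at_right 0)"
    using filterlim_times_pos[OF filterlim_ident, of c "0::real"] \<open>c > 0\<close> by simp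
  then have "((\<lambda>h. c * diff_quot u x (c * h) v) \<longlongrightarrow> c * l) (at_right 0)"
    by (intro tendsto_mult_left filterlim_compose[OF assms(1)])
  moreover have "c * diff_quot u x (c * h) v = diff_quot u x h (c *\<^sub>R v)" for h
    using \<open>c > 0\<close> by (simp add: diff_quot_def mult.commute)
  ultimately show ?thesis by simp
qed

lemma semiconcave_withD:
  assumes "semiconcave_with K \<omega> u" and "closed_segment x y \<subseteq> K" and "0 \<le> l" and "l \<le> 1"
  shows "l * u x + (1 - l) * u y - u (l *\<^sub>R x + (1 - l) *\<^sub>R y)
    \<le> l * (1 - l) * norm (x - y) * \<omega> (norm (x - y))"
  using assms unfolding semiconcave_with_def by (meson atLeastAtMost_iff ends_in_segment subsetD)

lemma semiconcave_diff_quot_almost_antimono: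
  assumes "semiconcave_with K \<omega> u" and "modulus \<omega>"
    and seg: "closed_segment x (x + h *\<^sub>R v) \<subseteq> K" and "0 < s" and "s \<le> h"
  shows "diff_quot u x h v - norm v * \<omega> (h * norm v) \<le> diff_quot u x s v"
proof -
  define l where "l = s / h"
  have "h > 0" and l: "0 \<le> l" "l \<le> 1" using \<open>0 < s\<close> \<open>s \<le> h\<close> by (auto simp: l_def)
  have comb: "l *\<^sub>R (x + h *\<^sub>R v) + (1 - l) *\<^sub>R x = x + s *\<^sub>R v"
    using \<open>h > 0\<close> by (simp add: l_def algebra_simps)
  have "closed_segment (x + h *\<^sub>R v) x \<subseteq> K"
    using seg by (simp add: closed_segment_commute)
  from semiconcave_withD[OF assms(1) this l]
  have "l * u (x + h *\<^sub>R v) + (1 - l) * u x - u (x + s *\<^sub>R v)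
      \<le> l * (1 - l) * (h * norm v) * \<omega> (h * norm v)"
    using \<open>h > 0\<close> by (simp add: comb)
  also have "\<dots> \<le> l * (h * norm v) * \<omega> (h * norm v)"
    using l \<open>h > 0\<close> modulus_nonneg[OF assms(2), of "h * norm v"]
    by (simp add: mult_left_le mult_right_mono)
  also have "\<dots> = s * (norm v * \<omega> (h * norm v))"
    using \<open>h > 0\<close> by (simp add: l_def)
  finally have "l * (u (x + h *\<^sub>R v) - u x) - (u (x + s *\<^sub>R v) - u x)
      \<le> s * (norm v * \<omega> (h * norm v))"
    by (simp add: algebra_simps)
  moreover have "l * (u (x + h *\<^sub>R v) - u x) = s * diff_quot u x h v"
    by (simp add: diff_quot_def l_def)
  moreover have "u (x + s *\<^sub>R v) - u x = s * diff_quot u x s v"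
    using \<open>s > 0\<close> by (simp add: diff_quot_def)
  ultimately have "s * diff_quot u x h v - s * (norm v * \<omega> (h * norm v)) \<le> s * diff_quot u x s v"
    by linarith
  then show ?thesis
    using \<open>0 < s\<close> by (simp flip: right_diff_distrib)
qed

lemma semiconcave_dir_deriv:
  assumes "L-lipschitz_on K u" and "modulus \<omega>" and "semiconcave_with K \<omega> u"
    and "h0 > 0" and seg: "closed_segment x (x + h0 *\<^sub>R v) \<subseteq> K"
  shows "((\<lambda>h. diff_quot u x h v) \<longlongrightarrow> dir_deriv u x v) (at_right 0)"
    and "\<And>h. 0 < h \<Longrightarrow> h \<le> h0 \<Longrightarrow> diff_quot u x h v - norm v * \<omega> (h * norm v) \<le> dir_deriv u x v"
proof -
  have seg_h: "closed_segment x (x + h *\<^sub>R v) \<subseteq> K" if "0 < h" "h \<le> h0" for h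
  proof -
    have "x + h *\<^sub>R v \<in> closed_segment x (x + h0 *\<^sub>R v)"
      using that \<open>h0 > 0\<close> unfolding in_segment
      by (intro exI[of _ "h / h0"]) (simp add: algebra_simps)
    then have "closed_segment x (x + h *\<^sub>R v) \<subseteq> closed_segment x (x + h0 *\<^sub>R v)"
      by (intro closed_segment_subset ends_in_segment convex_closed_segment)
    then show ?thesis
      using seg by (rule order_trans)
  qed
  have bounded: "diff_quot u x h v \<le> L * norm v" if "0 < h" "h \<le> h0" for h
  proof -
    have "x \<in> K" "x + h *\<^sub>R v \<in> K" using seg_h[OF that] by auto
    then show ?thesis using diff_quot_bound[OF assms(1) \<open>0 < h\<close>] by (simp add: abs_le_iff)
  qed
  have almost_antimono: "diff_quot u x h v - norm v * \<omega> (h * norm v) \<le> diff_quot u x s v"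
    if "0 < s" "s \<le> h" "h \<le> h0" for s h
  proof -
    have "closed_segment x (x + h *\<^sub>R v) \<subseteq> K" using that by (intro seg_h) auto
    from semiconcave_diff_quot_almost_antimono[OF assms(3,2) this that(1,2)] show ?thesis .
  qed
  obtain l where l: "((\<lambda>h. diff_quot u x h v) \<longlongrightarrow> l) (at_right 0)"
    and le: "\<And>h. 0 < h \<Longrightarrow> h \<le> h0 \<Longrightarrow> diff_quot u x h v - norm v * \<omega> (h * norm v) \<le> l"
    using tendsto_at_right_0_almost_antimono[OF \<open>h0 > 0\<close> bounded
        modulus_scaled_tendsto_0[OF assms(2) norm_ge_zero] almost_antimono] by blast
  show "((\<lambda>h. diff_quot u x h v) \<longlongrightarrow> dir_deriv u x v) (at_right 0)"
    and "\<And>h. 0 < h \<Longrightarrow> h \<le> h0 \<Longrightarrow> diff_quot u x h v - norm v * \<omega> (h * norm v) \<le> dir_deriv u x v"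
    using l le dir_deriv_eqI[OF l] by simp_all
qed

lemma semiconcave_diff_quot_concave:
  assumes "semiconcave_with K \<omega> u" and "modulus \<omega>"
    and seg: "closed_segment (x + h *\<^sub>R w1) (x + h *\<^sub>R w2) \<subseteq> K" and "h > 0" and "0 \<le> l" and "l \<le> 1"
  shows "l * diff_quot u x h w1 + (1 - l) * diff_quot u x h w2 - diff_quot u x h (l *\<^sub>R w1 + (1 - l) *\<^sub>R w2)
    \<le> norm (w1 - w2) * \<omega> (h * norm (w1 - w2))"
proof -
  define w where "w = l *\<^sub>R w1 + (1 - l) *\<^sub>R w2"
  define N where "N = norm (w1 - w2)"
  have comb: "l *\<^sub>R (x + h *\<^sub>R w1) + (1 - l) *\<^sub>R (x + h *\<^sub>R w2) = x + h *\<^sub>R w"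
    by (simp add: w_def algebra_simps)
  have dist: "norm (x + h *\<^sub>R w1 - (x + h *\<^sub>R w2)) = h * N"
    using \<open>h > 0\<close> by (simp add: N_def flip: scaleR_diff_right)
  have "h * (l * diff_quot u x h w1 + (1 - l) * diff_quot u x h w2 - diff_quot u x h w)
      = l * (h * diff_quot u x h w1) + (1 - l) * (h * diff_quot u x h w2) - h * diff_quot u x h w"
    by (simp add: algebra_simps)
  also have "\<dots> = l * u (x + h *\<^sub>R w1) + (1 - l) * u (x + h *\<^sub>R w2) - u (x + h *\<^sub>R w)"
    using \<open>h > 0\<close> by (simp add: diff_quot_mult algebra_simps)
  also have "\<dots> \<le> l * (1 - l) * (h * N) * \<omega> (h * N)"
    using semiconcave_withD[OF assms(1) seg \<open>0 \<le> l\<close> \<open>l \<le> 1\<close>] unfolding comb dist .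
  also have "\<dots> = (l * (1 - l)) * (h * (N * \<omega> (h * N)))"
    by (simp only: mult_ac)
  also have "\<dots> \<le> 1 * (h * (N * \<omega> (h * N)))"
    using \<open>0 \<le> l\<close> \<open>l \<le> 1\<close> \<open>h > 0\<close> modulus_nonneg[OF assms(2), of "h * N"]
    by (intro mult_right_mono) (simp_all add: mult_le_one N_def)
  finally have "h * (l * diff_quot u x h w1 + (1 - l) * diff_quot u x h w2 - diff_quot u x h w)
      \<le> h * (N * \<omega> (h * N))"
    by simp
  then show ?thesis
    unfolding w_def N_def using \<open>h > 0\<close> by (rule mult_left_le_imp_le)
qed

section \<open>Superdifferentials and Dini derivatives\<close>

lemma ereal_le_Liminf_eventually:
  assumes "\<And>e. e > 0 \<Longrightarrow> eventually (\<lambda>z. c - e < f z) F"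
  shows "ereal c \<le> Liminf F (\<lambda>z. ereal (f z))"
  unfolding le_Liminf_iff
proof (intro allI impI)
  fix y assume "y < ereal c"
  then show "eventually (\<lambda>z. y < ereal (f z)) F"
  proof (cases y)
    case (real r)
    then have "eventually (\<lambda>z. c - (c - r) < f z) F" using assms[of "c - r"] \<open>y < ereal c\<close> by simp
    then show ?thesis by eventually_elim (simp add: real)
  qed simp_all
qed

lemma Limsup_le_ereal_eventually:
  assumes "\<And>e. e > 0 \<Longrightarrow> eventually (\<lambda>z. f z < c + e) F"
  shows "Limsup F (\<lambda>z. ereal (f z)) \<le> ereal c"
  unfolding Limsup_le_iff
proof (intro allI impI)
  fix y assume "ereal c < y"
  then show "eventually (\<lambda>z. ereal (f z) < y) F"
  proof (cases y)
    case (real r)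
    then have "eventually (\<lambda>z. f z < c + (r - c)) F" using assms[of "r - c"] \<open>ereal c < y\<close> by simp
    then show ?thesis by eventually_elim (simp add: real)
  qed simp_all
qed

lemma superdiffI:
  assumes "\<And>\<eta>. \<eta> > 0 \<Longrightarrow> \<exists>\<delta>>0. \<forall>y\<in>K. norm (y - x) < \<delta> \<longrightarrow> u y - u x - inner q (y - x) \<le> \<eta> * norm (y - x)"
  shows "q \<in> superdiff K u x"
proof -
  have "Limsup (at x within K) (\<lambda>y. ereal ((u y - u x - inner q (y - x)) / norm (y - x))) \<le> ereal 0"
  proof (rule Limsup_le_ereal_eventually)
    fix e :: real assume "e > 0"
    then obtain \<delta> where "\<delta> > 0"
      and \<delta>: "\<And>y. y \<in> K \<Longrightarrow> norm (y - x) < \<delta> \<Longrightarrow> u y - u x - inner q (y - x) \<le> e / 2 * norm (y - x)"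
      using assms[of "e / 2"] by auto
    show "eventually (\<lambda>y. (u y - u x - inner q (y - x)) / norm (y - x) < 0 + e) (at x within K)"
      unfolding eventually_at
    proof (intro exI[of _ \<delta>] conjI \<open>\<delta> > 0\<close> ballI impI)
      fix y assume "y \<in> K" "y \<noteq> x \<and> dist y x < \<delta>"
      then have "norm (y - x) > 0" "u y - u x - inner q (y - x) \<le> e / 2 * norm (y - x)"
        using \<delta> by (auto simp: dist_norm)
      moreover have "e / 2 * norm (y - x) < e * norm (y - x)"
        using \<open>e > 0\<close> \<open>norm (y - x) > 0\<close> by simp
      ultimately show "(u y - u x - inner q (y - x)) / norm (y - x) < 0 + e"
        by (simp add: divide_less_eq)
    qed
  qed
  then show ?thesis by (simp add: superdiff_def zero_ereal_def)
qed

lemma superdiffD: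
  assumes "q \<in> superdiff K u x" and "\<eta> > 0"
  obtains \<delta> where "\<delta> > 0"
    and "\<And>y. y \<in> K \<Longrightarrow> norm (y - x) < \<delta> \<Longrightarrow> u y - u x - inner q (y - x) \<le> \<eta> * norm (y - x)"
proof -
  have "Limsup (at x within K) (\<lambda>y. ereal ((u y - u x - inner q (y - x)) / norm (y - x))) < ereal \<eta>"
    using assms by (simp add: superdiff_def) (meson ereal_less(2) le_less_trans)
  then have "eventually (\<lambda>y. ereal ((u y - u x - inner q (y - x)) / norm (y - x)) < ereal \<eta>) (at x within K)"
    by (rule Limsup_lessD)
  then obtain \<delta> where "\<delta> > 0"
    and \<delta>: "\<And>y. y \<in> K \<Longrightarrow> y \<noteq> x \<Longrightarrow> dist y x < \<delta> \<Longrightarrow> (u y - u x - inner q (y - x)) / norm (y - x) < \<eta>"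
    unfolding eventually_at by auto
  have "u y - u x - inner q (y - x) \<le> \<eta> * norm (y - x)" if "y \<in> K" "norm (y - x) < \<delta>" for y
  proof (cases "y = x")
    case False
    then show ?thesis using \<delta>[OF \<open>y \<in> K\<close> False] that by (simp add: dist_norm divide_less_eq less_imp_le)
  qed simp
  then show ?thesis using that \<open>\<delta> > 0\<close> by blast
qed

lemma eventually_dini_filterI:
  assumes "eventually P (at_right 0)" and "eventually Q (nhds \<theta>)"
    and "\<And>h t. P h \<Longrightarrow> Q t \<Longrightarrow> x + h *\<^sub>R t \<in> K \<Longrightarrow> R h t"
  shows "eventually (\<lambda>z. R (fst z) (snd z)) (dini_filter K x \<theta>)"
  unfolding dini_filter_def eventually_inf_principal eventually_prod_filter
  using assms by auto

lemma dini_upper_diff_quot: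
  "dini_upper K u x \<theta> = Limsup (dini_filter K x \<theta>) (\<lambda>z. ereal (diff_quot u x (fst z) (snd z)))"
  by (simp add: dini_upper_def diff_quot_def case_prod_unfold)

lemma dini_lower_diff_quot:
  "dini_lower K u x \<theta> = Liminf (dini_filter K x \<theta>) (\<lambda>z. ereal (diff_quot u x (fst z) (snd z)))"
  by (simp add: dini_lower_def diff_quot_def case_prod_unfold)

lemma superdiff_diff_quot_le:
  assumes "q \<in> superdiff K u x" and "\<eta> > 0"
  obtains \<delta> where "\<delta> > 0"
    and "\<And>h t. 0 < h \<Longrightarrow> h * norm t < \<delta> \<Longrightarrow> x + h *\<^sub>R t \<in> K
      \<Longrightarrow> diff_quot u x h t \<le> inner q t + \<eta> * norm t"
proof -
  obtain \<delta> where "\<delta> > 0"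
    and \<delta>: "\<And>y. y \<in> K \<Longrightarrow> norm (y - x) < \<delta> \<Longrightarrow> u y - u x - inner q (y - x) \<le> \<eta> * norm (y - x)"
    using superdiffD[OF assms] by blast
  have "diff_quot u x h t \<le> inner q t + \<eta> * norm t"
    if "0 < h" "h * norm t < \<delta>" "x + h *\<^sub>R t \<in> K" for h t
  proof -
    have "norm (x + h *\<^sub>R t - x) < \<delta>"
      using that by simp
    from \<delta>[OF that(3) this] have "h * diff_quot u x h t \<le> h * (inner q t + \<eta> * norm t)"
      using \<open>0 < h\<close> by (simp add: diff_quot_mult algebra_simps)
    then show ?thesis
      using \<open>0 < h\<close> by simp
  qed
  then show ?thesis
    using that \<open>\<delta> > 0\<close> by blast
qed

lemma superdiff_diff_quot_lt:
  assumes "q \<in> superdiff K u x" and "e > 0"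
  obtains \<delta> r where "\<delta> > 0" and "r > 0"
    and "\<And>h t. 0 < h \<Longrightarrow> h < \<delta> \<Longrightarrow> dist t \<theta> < r \<Longrightarrow> x + h *\<^sub>R t \<in> K
      \<Longrightarrow> diff_quot u x h t < inner q \<theta> + e"
proof -
  obtain \<eta> where "0 < \<eta>" and \<eta>: "\<eta> * (norm \<theta> + 1) \<le> e / 4"
    using exists_small_factor[of "norm \<theta> + 1" "e / 4"] \<open>e > 0\<close> by auto
  obtain r where "0 < r" "r \<le> 1" and r: "r * norm q \<le> e / 4"
    using exists_small_factor[of "norm q" "e / 4"] \<open>e > 0\<close> by auto
  obtain \<delta> where "\<delta> > 0" and \<delta>: "\<And>h t. 0 < h \<Longrightarrow> h * norm t < \<delta> \<Longrightarrow> x + h *\<^sub>R t \<in> K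
      \<Longrightarrow> diff_quot u x h t \<le> inner q t + \<eta> * norm t"
    using superdiff_diff_quot_le[OF assms(1) \<open>\<eta> > 0\<close>] by blast
  have pos: "0 < norm \<theta> + 1"
    by (simp add: add_nonneg_pos)
  have "diff_quot u x h t < inner q \<theta> + e"
    if h: "0 < h" "h < \<delta> / (norm \<theta> + 1)" and "dist t \<theta> < r" and "x + h *\<^sub>R t \<in> K" for h t
  proof -
    have "norm t \<le> norm \<theta> + 1"
      using \<open>dist t \<theta> < r\<close> \<open>r \<le> 1\<close> norm_triangle_ineq2[of t \<theta>] by (simp add: dist_norm)
    then have "h * norm t \<le> h * (norm \<theta> + 1)"
      using h by (intro mult_left_mono) auto
    moreover have "h * (norm \<theta> + 1) < \<delta>"
      using h pos by (simp add: less_divide_eq)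
    ultimately have "h * norm t < \<delta>"
      by linarith
    from \<delta>[OF h(1) this \<open>x + h *\<^sub>R t \<in> K\<close>]
    have "diff_quot u x h t \<le> inner q t + \<eta> * norm t" .
    also have "\<dots> \<le> inner q \<theta> + r * norm q + e / 4"
    proof -
      have "norm q * norm (t - \<theta>) \<le> norm q * r"
        using \<open>dist t \<theta> < r\<close> by (intro mult_left_mono) (auto simp: dist_norm)
      then have "inner q (t - \<theta>) \<le> r * norm q"
        using norm_cauchy_schwarz[of q "t - \<theta>"] by (simp add: mult.commute)
      moreover have "\<eta> * norm t \<le> \<eta> * (norm \<theta> + 1)"
        using \<open>norm t \<le> norm \<theta> + 1\<close> \<open>\<eta> > 0\<close> by (intro mult_left_mono) auto
      ultimately show ?thesis
        using \<eta> by (simp add: inner_diff_right)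
    qed
    also have "\<dots> < inner q \<theta> + e"
      using r \<open>e > 0\<close> by simp
    finally show ?thesis .
  qed
  moreover have "\<delta> / (norm \<theta> + 1) > 0"
    using \<open>\<delta> > 0\<close> pos by simp
  ultimately show ?thesis
    using that \<open>r > 0\<close> by blast
qed

lemma dini_upper_le_superdiff:
  assumes "q \<in> superdiff K u x"
  shows "dini_upper K u x \<theta> \<le> ereal (inner q \<theta>)"
  unfolding dini_upper_diff_quot
proof (rule Limsup_le_ereal_eventually)
  fix e :: real assume "e > 0"
  obtain \<delta> r where "\<delta> > 0" and "r > 0" and lt: "\<And>h t. 0 < h \<Longrightarrow> h < \<delta> \<Longrightarrow> dist t \<theta> < r
      \<Longrightarrow> x + h *\<^sub>R t \<in> K \<Longrightarrow> diff_quot u x h t < inner q \<theta> + e"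
    using superdiff_diff_quot_lt[OF assms \<open>e > 0\<close>] by blast
  show "eventually (\<lambda>z. diff_quot u x (fst z) (snd z) < inner q \<theta> + e) (dini_filter K x \<theta>)"
  proof (rule eventually_dini_filterI)
    show "eventually (\<lambda>h. 0 < h \<and> h < \<delta>) (at_right 0)"
      using eventually_at_right_real[OF \<open>\<delta> > 0\<close>] by simp
    show "eventually (\<lambda>t. dist t \<theta> < r) (nhds \<theta>)"
      using \<open>r > 0\<close> unfolding eventually_nhds_metric by blast
  qed (use lt in blast)
qed

section \<open>Sets with a tangent half-space\<close>

definition trunc_cone :: "'a::real_inner \<Rightarrow> 'a \<Rightarrow> real \<Rightarrow> real \<Rightarrow> 'a set" where
  "trunc_cone x \<nu> \<epsilon> \<rho> = {z. norm (z - x) < \<rho> \<and> inner \<nu> (z - x) + \<epsilon> * norm (z - x) \<le> 0}"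

definition tangent_halfspace_at :: "'a::real_inner set \<Rightarrow> 'a \<Rightarrow> 'a \<Rightarrow> bool" where
  "tangent_halfspace_at K x \<nu> \<longleftrightarrow> norm \<nu> = 1 \<and>
    (\<forall>\<epsilon>>0. \<exists>\<rho>>0. (\<forall>y\<in>K. norm (y - x) < \<rho> \<longrightarrow> inner \<nu> (y - x) \<le> \<epsilon> * norm (y - x))
      \<and> trunc_cone x \<nu> \<epsilon> \<rho> \<subseteq> K)"

lemma convex_trunc_cone:
  assumes "\<epsilon> \<ge> 0"
  shows "convex (trunc_cone x \<nu> \<epsilon> \<rho>)"
  unfolding convex_def
proof (intro ballI allI impI)
  fix z1 z2 and a b :: real
  assume z: "z1 \<in> trunc_cone x \<nu> \<epsilon> \<rho>" "z2 \<in> trunc_cone x \<nu> \<epsilon> \<rho>" and ab: "0 \<le> a" "0 \<le> b" "a + b = 1"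
  have eq: "a *\<^sub>R z1 + b *\<^sub>R z2 - x = a *\<^sub>R (z1 - x) + b *\<^sub>R (z2 - x)"
    using ab by (simp add: algebra_simps flip: scaleR_add_left)
  have norm_le: "norm (a *\<^sub>R z1 + b *\<^sub>R z2 - x) \<le> a * norm (z1 - x) + b * norm (z2 - x)"
    unfolding eq using norm_triangle_ineq[of "a *\<^sub>R (z1 - x)" "b *\<^sub>R (z2 - x)"] ab by simp
  have "a * norm (z1 - x) + b * norm (z2 - x) < a * \<rho> + b * \<rho>"
  proof (cases "a = 0")
    case False
    then have "a * norm (z1 - x) < a * \<rho>"
      using z ab by (simp add: trunc_cone_def)
    moreover have "b * norm (z2 - x) \<le> b * \<rho>"
      using z ab by (intro mult_left_mono) (auto simp: trunc_cone_def)
    ultimately show ?thesis by simp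
  qed (use z ab in \<open>simp add: trunc_cone_def\<close>)
  then have "norm (a *\<^sub>R z1 + b *\<^sub>R z2 - x) < \<rho>"
    using norm_le ab by (simp flip: distrib_right)
  moreover have "inner \<nu> (a *\<^sub>R z1 + b *\<^sub>R z2 - x) + \<epsilon> * norm (a *\<^sub>R z1 + b *\<^sub>R z2 - x)
      \<le> a * (inner \<nu> (z1 - x) + \<epsilon> * norm (z1 - x)) + b * (inner \<nu> (z2 - x) + \<epsilon> * norm (z2 - x))"
    using mult_left_mono[OF norm_le assms] unfolding eq by (simp add: algebra_simps)
  moreover have "\<dots> \<le> 0"
    using z ab by (simp add: trunc_cone_def add_nonpos_nonpos mult_nonneg_nonpos)
  ultimately show "a *\<^sub>R z1 + b *\<^sub>R z2 \<in> trunc_cone x \<nu> \<epsilon> \<rho>"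
    by (simp add: trunc_cone_def)
qed

lemma scaleR_in_trunc_cone:
  assumes "inner \<nu> w + \<epsilon> * norm w \<le> 0" and "0 \<le> h" and "h * norm w < \<rho>"
  shows "x + h *\<^sub>R w \<in> trunc_cone x \<nu> \<epsilon> \<rho>"
proof -
  have "h * (inner \<nu> w + \<epsilon> * norm w) \<le> 0"
    using assms by (simp add: mult_nonneg_nonpos)
  then show ?thesis
    using assms by (simp add: trunc_cone_def algebra_simps)
qed

lemma closed_segment_in_trunc_cone:
  assumes "\<epsilon> \<ge> 0" and "inner \<nu> w1 + \<epsilon> * norm w1 \<le> 0" and "inner \<nu> w2 + \<epsilon> * norm w2 \<le> 0"
    and "0 \<le> h" and "h * norm w1 < \<rho>" and "h * norm w2 < \<rho>"
  shows "closed_segment (x + h *\<^sub>R w1) (x + h *\<^sub>R w2) \<subseteq> trunc_cone x \<nu> \<epsilon> \<rho>"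
  using assms by (intro closed_segment_subset convex_trunc_cone scaleR_in_trunc_cone)

lemma tangent_halfspace_at_flat:
  assumes "tangent_halfspace_at K x \<nu>" and "\<epsilon> > 0"
  obtains \<rho> where "\<rho> > 0"
    and "\<And>y. y \<in> K \<Longrightarrow> norm (y - x) < \<rho> \<Longrightarrow> inner \<nu> (y - x) \<le> \<epsilon> * norm (y - x)"
  using assms unfolding tangent_halfspace_at_def by blast

lemma tangent_halfspace_at_trunc_cone:
  assumes "tangent_halfspace_at K x \<nu>" and "\<epsilon> > 0"
  obtains \<rho> where "\<rho> > 0" and "trunc_cone x \<nu> \<epsilon> \<rho> \<subseteq> K"
  using assms unfolding tangent_halfspace_at_def by blast

lemma has_derivative_inner_approx:
  fixes \<psi> :: "'a::real_inner \<Rightarrow> real"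
  assumes "(\<psi> has_derivative (\<lambda>v. inner a v)) (at x)" and "\<psi> x = 0" and "e > 0" and "r > 0"
  obtains \<rho> where "\<rho> > 0"
    and "\<And>z. norm (z - x) < \<rho> \<Longrightarrow> z \<in> ball x r \<and> \<bar>\<psi> z - inner a (z - x)\<bar> \<le> e * norm (z - x)"
proof -
  obtain \<rho>0 where "\<rho>0 > 0"
    and lin: "\<And>z. norm (z - x) < \<rho>0 \<Longrightarrow> \<bar>\<psi> z - inner a (z - x)\<bar> \<le> e * norm (z - x)"
    using assms(1-3) unfolding has_derivative_at_alt by force
  have "z \<in> ball x r \<and> \<bar>\<psi> z - inner a (z - x)\<bar> \<le> e * norm (z - x)" if "norm (z - x) < min \<rho>0 r" for z
    using that lin[of z] by (metis dist_commute dist_norm mem_ball min_less_iff_conj)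
  moreover have "min \<rho>0 r > 0"
    using \<open>\<rho>0 > 0\<close> \<open>r > 0\<close> by simp
  ultimately show ?thesis
    using that by blast
qed

lemma sublevel_below_flat_cone:
  fixes \<psi> :: "'a::real_inner \<Rightarrow> real"
  assumes deriv: "(\<psi> has_derivative (\<lambda>v. inner a v)) (at x)" and "a \<noteq> 0" and "\<psi> x = 0"
    and "r > 0" and "\<epsilon> > 0" and below: "\<And>y. y \<in> K \<Longrightarrow> y \<in> ball x r \<Longrightarrow> \<psi> y \<le> 0"
  obtains \<rho> where "\<rho> > 0"
    and "\<And>y. y \<in> K \<Longrightarrow> norm (y - x) < \<rho> \<Longrightarrow> inner (a /\<^sub>R norm a) (y - x) \<le> \<epsilon> * norm (y - x)"
proof -
  have "norm a * \<epsilon> > 0" using \<open>a \<noteq> 0\<close> \<open>\<epsilon> > 0\<close> by simp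
  then obtain \<rho> where "\<rho> > 0" and near: "\<And>z. norm (z - x) < \<rho>
      \<Longrightarrow> z \<in> ball x r \<and> \<bar>\<psi> z - inner a (z - x)\<bar> \<le> norm a * \<epsilon> * norm (z - x)"
    using has_derivative_inner_approx[OF deriv \<open>\<psi> x = 0\<close> _ \<open>r > 0\<close>] by blast
  have "inner (a /\<^sub>R norm a) (y - x) \<le> \<epsilon> * norm (y - x)" if "y \<in> K" "norm (y - x) < \<rho>" for y
  proof -
    have "inner a (y - x) \<le> \<epsilon> * norm (y - x) * norm a"
      using near[OF that(2)] below[OF that(1)] by (simp add: abs_le_iff mult_ac)
    moreover have "inner (a /\<^sub>R norm a) (y - x) = inner a (y - x) / norm a"
      by (simp add: divide_inverse mult.commute)
    ultimately show ?thesis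
      using \<open>a \<noteq> 0\<close> by (simp add: pos_divide_le_eq)
  qed
  then show ?thesis
    using that \<open>\<rho> > 0\<close> by blast
qed

lemma sublevel_contains_trunc_cone:
  fixes \<psi> :: "'a::real_inner \<Rightarrow> real"
  assumes deriv: "(\<psi> has_derivative (\<lambda>v. inner a v)) (at x)" and "a \<noteq> 0" and "\<psi> x = 0"
    and "x \<in> K" and "r > 0" and "\<epsilon> > 0" and above: "\<And>z. z \<in> ball x r \<Longrightarrow> \<psi> z < 0 \<Longrightarrow> z \<in> K"
  obtains \<rho> where "\<rho> > 0" and "trunc_cone x (a /\<^sub>R norm a) \<epsilon> \<rho> \<subseteq> K"
proof -
  define e where "e = norm a * \<epsilon> / 2"
  have "e > 0" using \<open>a \<noteq> 0\<close> \<open>\<epsilon> > 0\<close> by (simp add: e_def)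
  then obtain \<rho> where "\<rho> > 0"
    and near: "\<And>z. norm (z - x) < \<rho> \<Longrightarrow> z \<in> ball x r \<and> \<bar>\<psi> z - inner a (z - x)\<bar> \<le> e * norm (z - x)"
    using has_derivative_inner_approx[OF deriv \<open>\<psi> x = 0\<close> _ \<open>r > 0\<close>] by blast
  have "z \<in> K" if z: "z \<in> trunc_cone x (a /\<^sub>R norm a) \<epsilon> \<rho>" and "z \<noteq> x" for z
  proof -
    have "norm (z - x) < \<rho>"
      using z by (simp add: trunc_cone_def)
    have "norm a * (inner (a /\<^sub>R norm a) (z - x) + \<epsilon> * norm (z - x)) \<le> 0"
      using z by (simp add: trunc_cone_def mult_nonneg_nonpos)
    moreover have "inner a (z - x) = norm a * inner (a /\<^sub>R norm a) (z - x)"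
      using \<open>a \<noteq> 0\<close> by simp
    ultimately have "inner a (z - x) + 2 * (e * norm (z - x)) \<le> 0"
      by (simp add: e_def algebra_simps)
    moreover have "\<psi> z \<le> inner a (z - x) + e * norm (z - x)"
      using near[OF \<open>norm (z - x) < \<rho>\<close>] by (simp add: abs_le_iff)
    ultimately have "\<psi> z \<le> - (e * norm (z - x))"
      by linarith
    also have "\<dots> < 0"
      using \<open>z \<noteq> x\<close> \<open>e > 0\<close> by simp
    finally show ?thesis
      using above near[OF \<open>norm (z - x) < \<rho>\<close>] by blast
  qed
  then have "trunc_cone x (a /\<^sub>R norm a) \<epsilon> \<rho> \<subseteq> K"
    using \<open>x \<in> K\<close> by blast
  then show ?thesis
    using that \<open>\<rho> > 0\<close> by blast
qed

lemma tangent_halfspace_at_sublevel: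
  fixes \<psi> :: "'a::real_inner \<Rightarrow> real"
  assumes deriv: "(\<psi> has_derivative (\<lambda>v. inner a v)) (at x)" and "a \<noteq> 0" and "\<psi> x = 0"
    and "x \<in> K" and "r > 0"
    and below: "\<And>y. y \<in> K \<Longrightarrow> y \<in> ball x r \<Longrightarrow> \<psi> y \<le> 0"
    and above: "\<And>z. z \<in> ball x r \<Longrightarrow> \<psi> z < 0 \<Longrightarrow> z \<in> K"
  shows "tangent_halfspace_at K x (a /\<^sub>R norm a)"
  unfolding tangent_halfspace_at_def
proof (intro conjI allI impI)
  show "norm (a /\<^sub>R norm a) = 1" using \<open>a \<noteq> 0\<close> by simp
  fix \<epsilon> :: real assume "\<epsilon> > 0"
  obtain \<rho>1 where "\<rho>1 > 0" and flat: "\<And>y. y \<in> K \<Longrightarrow> norm (y - x) < \<rho>1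
      \<Longrightarrow> inner (a /\<^sub>R norm a) (y - x) \<le> \<epsilon> * norm (y - x)"
    using sublevel_below_flat_cone[OF deriv \<open>a \<noteq> 0\<close> \<open>\<psi> x = 0\<close> \<open>r > 0\<close> \<open>\<epsilon> > 0\<close> below] by blast
  obtain \<rho>2 where "\<rho>2 > 0" and "trunc_cone x (a /\<^sub>R norm a) \<epsilon> \<rho>2 \<subseteq> K"
    by (rule sublevel_contains_trunc_cone[OF deriv \<open>a \<noteq> 0\<close> \<open>\<psi> x = 0\<close> \<open>x \<in> K\<close> \<open>r > 0\<close> \<open>\<epsilon> > 0\<close> above])
  moreover have "trunc_cone x (a /\<^sub>R norm a) \<epsilon> (min \<rho>1 \<rho>2) \<subseteq> trunc_cone x (a /\<^sub>R norm a) \<epsilon> \<rho>2"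
    by (auto simp: trunc_cone_def)
  ultimately show "\<exists>\<rho>>0. (\<forall>y\<in>K. norm (y - x) < \<rho> \<longrightarrow> inner (a /\<^sub>R norm a) (y - x) \<le> \<epsilon> * norm (y - x))
      \<and> trunc_cone x (a /\<^sub>R norm a) \<epsilon> \<rho> \<subseteq> K"
    using \<open>\<rho>1 > 0\<close> flat by (intro exI[of _ "min \<rho>1 \<rho>2"]) auto
qed

lemma local_defining_fun_boundary:
  assumes "open \<Omega>" and "x \<in> frontier \<Omega>" and "local_defining_fun \<Omega> x r \<psi> g"
  shows local_defining_fun_closure_nonpos: "\<And>y. y \<in> closure \<Omega> \<Longrightarrow> y \<in> ball x r \<Longrightarrow> \<psi> y \<le> 0"
    and local_defining_fun_boundary_zero: "\<psi> x = 0"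
proof -
  have ball: "\<Omega> \<inter> ball x r = {y \<in> ball x r. \<psi> y < 0}"
    and deriv: "\<And>y. y \<in> ball x r \<Longrightarrow> (\<psi> has_derivative (\<lambda>v. inner (g y) v)) (at y)"
    using assms(3) by (auto simp: local_defining_fun_def C2_on_def)
  have "continuous_on (ball x r) \<psi>"
    by (rule has_derivative_continuous_on[OF has_derivative_at_withinI[OF deriv]])
  then have "open (ball x r \<inter> \<psi> -` {0<..})"
    by (intro continuous_open_preimage) auto
  moreover have "\<psi> y < 0" if "y \<in> \<Omega>" "y \<in> ball x r" for y
    using ball that by blast
  then have "(ball x r \<inter> \<psi> -` {0<..}) \<inter> \<Omega> = {}"
    by fastforce
  ultimately have empty: "(ball x r \<inter> \<psi> -` {0<..}) \<inter> closure \<Omega> = {}"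
    by (simp add: open_Int_closure_eq_empty)
  show nonpos: "\<psi> y \<le> 0" if "y \<in> closure \<Omega>" "y \<in> ball x r" for y
  proof (rule ccontr)
    assume "\<not> \<psi> y \<le> 0"
    then have "y \<in> (ball x r \<inter> \<psi> -` {0<..}) \<inter> closure \<Omega>"
      using that by simp
    then show False
      using empty by blast
  qed
  have "x \<in> closure \<Omega>" "x \<notin> \<Omega>" "x \<in> ball x r"
    using assms(1-3) by (auto simp: frontier_def interior_open local_defining_fun_def)
  then have "\<psi> x \<le> 0" and "\<not> \<psi> x < 0"
    using nonpos ball by blast+
  then show "\<psi> x = 0"
    by simp
qed

lemma tangent_halfspace_at_outward_normal:
  assumes "open \<Omega>" and "x \<in> frontier \<Omega>" and "outward_unit_normal \<Omega> x \<nu>"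
  shows "tangent_halfspace_at (closure \<Omega>) x \<nu>"
proof -
  obtain r \<psi> g where ldf: "local_defining_fun \<Omega> x r \<psi> g" and \<nu>: "\<nu> = g x /\<^sub>R norm (g x)"
    using assms(3) unfolding outward_unit_normal_def by blast
  then have "r > 0" and "g x \<noteq> 0" and ball: "\<Omega> \<inter> ball x r = {y \<in> ball x r. \<psi> y < 0}"
    and deriv: "(\<psi> has_derivative (\<lambda>v. inner (g x) v)) (at x)"
    by (auto simp: local_defining_fun_def C2_on_def)
  have "x \<in> closure \<Omega>"
    using assms(2) by (simp add: frontier_def)
  have "z \<in> closure \<Omega>" if "z \<in> ball x r" "\<psi> z < 0" for z
    using that ball closure_subset by blast
  then show ?thesis
    unfolding \<nu> using local_defining_fun_closure_nonpos[OF assms(1,2) ldf]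
    by (intro tangent_halfspace_at_sublevel[OF deriv \<open>g x \<noteq> 0\<close>
        local_defining_fun_boundary_zero[OF assms(1,2) ldf] \<open>x \<in> closure \<Omega>\<close> \<open>r > 0\<close>]) auto
qed

section \<open>The McShane extension\<close>

definition mcshane_ext :: "real \<Rightarrow> ('a::real_normed_vector \<Rightarrow> real) \<Rightarrow> 'a set \<Rightarrow> 'a \<Rightarrow> real" where
  "mcshane_ext L f S v = (SUP w\<in>S. f w - L * norm (v - w))"

context
  fixes L :: real and f :: "'a::real_normed_vector \<Rightarrow> real" and S :: "'a set"
  assumes lipschitz: "L-lipschitz_on S f" and "S \<noteq> {}"
begin

lemma mcshane_ext_bdd: "bdd_above ((\<lambda>w. f w - L * norm (v - w)) ` S)"
proof -
  obtain w0 where "w0 \<in> S" using \<open>S \<noteq> {}\<close> by blast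
  show ?thesis
  proof (rule bdd_aboveI2)
    fix w assume "w \<in> S"
    have "f w \<le> f w0 + L * norm (w - w0)"
      using lipschitz_onD[OF lipschitz \<open>w \<in> S\<close> \<open>w0 \<in> S\<close>] by (simp add: dist_norm dist_real_def)
    moreover have "L * norm (w - w0) \<le> L * norm (v - w) + L * norm (v - w0)"
      using norm_triangle_ineq4[of "v - w0" "v - w"] lipschitz_on_nonneg[OF lipschitz]
      by (simp add: mult_left_mono flip: distrib_left)
    ultimately show "f w - L * norm (v - w) \<le> f w0 + L * norm (v - w0)"
      by linarith
  qed
qed

lemma mcshane_ext_ge: "w \<in> S \<Longrightarrow> f w - L * norm (v - w) \<le> mcshane_ext L f S v"
  unfolding mcshane_ext_def by (rule cSUP_upper[OF _ mcshane_ext_bdd])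

lemma mcshane_ext_le: "(\<And>w. w \<in> S \<Longrightarrow> f w - L * norm (v - w) \<le> M) \<Longrightarrow> mcshane_ext L f S v \<le> M"
  unfolding mcshane_ext_def using \<open>S \<noteq> {}\<close> by (intro cSUP_least) auto

lemma mcshane_ext_eq: "w \<in> S \<Longrightarrow> mcshane_ext L f S w = f w"
proof (rule antisym)
  assume "w \<in> S"
  show "mcshane_ext L f S w \<le> f w"
  proof (rule mcshane_ext_le)
    fix w' assume "w' \<in> S"
    then show "f w' - L * norm (w - w') \<le> f w"
      using lipschitz_onD[OF lipschitz \<open>w' \<in> S\<close> \<open>w \<in> S\<close>] by (simp add: dist_norm dist_real_def norm_minus_commute)
  qed
  show "f w \<le> mcshane_ext L f S w"
    using mcshane_ext_ge[OF \<open>w \<in> S\<close>, of w] by simp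
qed

lemma lipschitz_on_mcshane_ext: "L-lipschitz_on UNIV (mcshane_ext L f S)"
proof (rule lipschitz_onI)
  have le: "mcshane_ext L f S v \<le> mcshane_ext L f S v' + L * norm (v - v')" for v v'
  proof (rule mcshane_ext_le)
    fix w assume "w \<in> S"
    have "L * norm (v' - w) \<le> L * norm (v - w) + L * norm (v - v')"
      using norm_triangle_ineq4[of "v - w" "v - v'"] lipschitz_on_nonneg[OF lipschitz]
      by (simp add: mult_left_mono flip: distrib_left)
    then show "f w - L * norm (v - w) \<le> mcshane_ext L f S v' + L * norm (v - v')"
      using mcshane_ext_ge[OF \<open>w \<in> S\<close>, of v'] by linarith
  qed
  show "dist (mcshane_ext L f S v) (mcshane_ext L f S v') \<le> L * dist v v'" for v v'
    using le[of v v'] le[of v' v] by (simp add: dist_real_def dist_norm norm_minus_commute abs_le_iff)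
  show "0 \<le> L" by (rule lipschitz_on_nonneg[OF lipschitz])
qed

lemma mcshane_ext_ge_convex_combination:
  assumes "concave_on S f" and "w1 \<in> S" and "w2 \<in> S" and "0 \<le> a" and "0 \<le> b" and "a + b = 1"
  shows "a * (f w1 - L * norm (v1 - w1)) + b * (f w2 - L * norm (v2 - w2))
    \<le> mcshane_ext L f S (a *\<^sub>R v1 + b *\<^sub>R v2)"
proof -
  define v where "v = a *\<^sub>R v1 + b *\<^sub>R v2"
  define w where "w = a *\<^sub>R w1 + b *\<^sub>R w2"
  have "w \<in> S" and "a * f w1 + b * f w2 \<le> f w"
    using assms by (auto simp: concave_on_iff convex_def w_def)
  moreover have "norm (v - w) \<le> a * norm (v1 - w1) + b * norm (v2 - w2)"
  proof -
    have "v - w = a *\<^sub>R (v1 - w1) + b *\<^sub>R (v2 - w2)"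
      by (simp add: v_def w_def algebra_simps)
    then show ?thesis
      using norm_triangle_ineq[of "a *\<^sub>R (v1 - w1)" "b *\<^sub>R (v2 - w2)"] \<open>0 \<le> a\<close> \<open>0 \<le> b\<close> by simp
  qed
  then have "L * norm (v - w) \<le> a * (L * norm (v1 - w1)) + b * (L * norm (v2 - w2))"
    using lipschitz_on_nonneg[OF lipschitz] mult_left_mono by (fastforce simp: algebra_simps)
  ultimately have "a * (f w1 - L * norm (v1 - w1)) + b * (f w2 - L * norm (v2 - w2))
      \<le> f w - L * norm (v - w)"
    by (simp add: algebra_simps)
  also have "\<dots> \<le> mcshane_ext L f S v"
    by (rule mcshane_ext_ge[OF \<open>w \<in> S\<close>])
  finally show ?thesis
    unfolding v_def .
qed

lemma concave_on_mcshane_ext: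
  assumes "concave_on S f"
  shows "concave_on UNIV (mcshane_ext L f S)"
  unfolding concave_on_iff
proof (intro conjI convex_UNIV ballI allI impI)
  let ?F = "mcshane_ext L f S"
  fix v1 v2 :: 'a and a b :: real
  assume ab: "0 \<le> a" "0 \<le> b" "a + b = 1"
  let ?v = "a *\<^sub>R v1 + b *\<^sub>R v2"
  show "a * ?F v1 + b * ?F v2 \<le> ?F ?v"
  proof (cases "a = 0 \<or> b = 0")
    case True
    then show ?thesis using \<open>a + b = 1\<close> by auto
  next
    case False
    then have "a > 0" "b > 0" using ab by auto
    have "?F v2 \<le> (?F ?v - a * ?F v1) / b"
    proof (rule mcshane_ext_le)
      fix w2 assume "w2 \<in> S"
      have "?F v1 \<le> (?F ?v - b * (f w2 - L * norm (v2 - w2))) / a"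
      proof (rule mcshane_ext_le)
        fix w1 assume "w1 \<in> S"
        show "f w1 - L * norm (v1 - w1) \<le> (?F ?v - b * (f w2 - L * norm (v2 - w2))) / a"
          using mcshane_ext_ge_convex_combination[OF assms \<open>w1 \<in> S\<close> \<open>w2 \<in> S\<close> ab] \<open>a > 0\<close>
          by (simp add: le_divide_eq algebra_simps)
      qed
      then show "f w2 - L * norm (v2 - w2) \<le> (?F ?v - a * ?F v1) / b"
        using \<open>a > 0\<close> \<open>b > 0\<close> by (simp add: le_divide_eq algebra_simps)
    qed
    then show ?thesis
      using \<open>b > 0\<close> by (simp add: le_divide_eq algebra_simps)
  qed
qed

lemma mcshane_ext_scaleR:
  assumes "c > 0" and "\<And>w. w \<in> S \<Longrightarrow> c *\<^sub>R w \<in> S \<and> f (c *\<^sub>R w) = c * f w"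
  shows "c * mcshane_ext L f S v \<le> mcshane_ext L f S (c *\<^sub>R v)"
proof -
  have "mcshane_ext L f S v \<le> mcshane_ext L f S (c *\<^sub>R v) / c"
  proof (rule mcshane_ext_le)
    fix w assume "w \<in> S"
    have "f (c *\<^sub>R w) - L * norm (c *\<^sub>R v - c *\<^sub>R w) \<le> mcshane_ext L f S (c *\<^sub>R v)"
      using assms(2)[OF \<open>w \<in> S\<close>] by (intro mcshane_ext_ge) simp
    moreover have "norm (c *\<^sub>R v - c *\<^sub>R w) = c * norm (v - w)"
      using \<open>c > 0\<close> by (simp flip: scaleR_diff_right)
    ultimately show "f w - L * norm (v - w) \<le> mcshane_ext L f S (c *\<^sub>R v) / c"
      using assms(2)[OF \<open>w \<in> S\<close>] \<open>c > 0\<close> by (simp add: le_divide_eq algebra_simps)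
  qed
  then show ?thesis
    using \<open>c > 0\<close> by (simp add: le_divide_eq mult.commute)
qed

end

section \<open>Supergradients of concave functions\<close>

lemma convex_strict_hypograph:
  assumes "concave_on UNIV F"
  shows "convex {z :: 'a::real_vector \<times> real. snd z < F (fst z)}"
  unfolding convex_def
proof (intro ballI allI impI, clarsimp)
  fix w1 r1 w2 r2 and a b :: real
  assume "r1 < F w1" "r2 < F w2" "0 \<le> a" "0 \<le> b" "a + b = 1"
  have "a * r1 + b * r2 < a * F w1 + b * F w2"
  proof (cases "a = 0")
    case False
    then have "a * r1 < a * F w1"
      using \<open>r1 < F w1\<close> \<open>0 \<le> a\<close> by simp
    moreover have "b * r2 \<le> b * F w2"
      using \<open>r2 < F w2\<close> \<open>0 \<le> b\<close> by (simp add: mult_left_mono)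
    ultimately show ?thesis by simp
  qed (use \<open>r2 < F w2\<close> \<open>a + b = 1\<close> in simp)
  also have "\<dots> \<le> F (a *\<^sub>R w1 + b *\<^sub>R w2)"
    using assms \<open>0 \<le> a\<close> \<open>0 \<le> b\<close> \<open>a + b = 1\<close> by (simp add: concave_on_iff)
  finally show "a * r1 + b * r2 < F (a *\<^sub>R w1 + b *\<^sub>R w2)" .
qed

lemma concave_on_UNIV_supergradient:
  fixes F :: "'a::euclidean_space \<Rightarrow> real"
  assumes "concave_on UNIV F"
  shows "\<exists>p. \<forall>w. F w \<le> F t + inner p (w - t)"
proof -
  define A where "A = {z :: 'a \<times> real. snd z < F (fst z)}"
  have "(t, F t - 1) \<in> A" and disjoint: "A \<inter> {(t, F t)} = {}"
    by (simp_all add: A_def)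
  then obtain c b where "c \<noteq> 0" and A: "\<forall>z\<in>A. inner c z \<le> b" and "inner c (t, F t) \<ge> b"
    using separating_hyperplane_sets[OF convex_strict_hypograph[OF assms, folded A_def]
        convex_singleton _ _ disjoint] by blast
  obtain q s where c: "c = (q, s)" by (cases c)
  have main: "inner q w + s * r \<le> inner q t + s * F t" if "r < F w" for w r
    using A \<open>inner c (t, F t) \<ge> b\<close> that by (fastforce simp: A_def c)
  have "s > 0"
  proof (rule ccontr)
    assume "\<not> s > 0"
    moreover have "s \<noteq> 0"
    proof
      assume "s = 0"
      then have "q \<noteq> 0" using \<open>c \<noteq> 0\<close> c by (auto simp: zero_prod_def)
      moreover have "inner q (t + q) \<le> inner q t"
        using main[of "F (t + q) - 1" "t + q"] \<open>s = 0\<close> by simp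
      then have "inner q q \<le> 0"
        by (simp add: inner_add_right)
      ultimately show False
        by (metis inner_gt_zero_iff not_le)
    qed
    moreover have "s * (F t - 1) \<le> s * F t"
      using main[of "F t - 1" t] by simp
    ultimately show False by (simp add: right_diff_distrib)
  qed
  have "F w \<le> F t + inner (- (1 / s) *\<^sub>R q) (w - t)" for w
  proof (rule field_le_epsilon)
    fix e :: real assume "e > 0"
    have "s * (F w - e) \<le> s * F t - inner q (w - t)"
      using main[of "F w - e" w] \<open>e > 0\<close> by (simp add: algebra_simps)
    then show "F w \<le> F t + inner (- (1 / s) *\<^sub>R q) (w - t) + e"
      using \<open>s > 0\<close> by (simp add: field_simps)
  qed
  then show ?thesis by blast
qed

lemma concave_linear_majorant_at:
  fixes F :: "'a::euclidean_space \<Rightarrow> real"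
  assumes "concave_on UNIV F" and "0 \<le> F 0" and "2 * F t \<le> F (2 *\<^sub>R t)"
  obtains p where "inner p t = F t" and "\<And>w. F w \<le> inner p w"
proof -
  obtain p where p: "\<And>w. F w \<le> F t + inner p (w - t)"
    using concave_on_UNIV_supergradient[OF assms(1)] by blast
  have "inner p t \<le> F t" using p[of 0] assms(2) by simp
  moreover have "F t \<le> inner p t" using p[of "2 *\<^sub>R t"] assms(3) by (simp add: algebra_simps)
  ultimately show ?thesis
    using that p by (simp add: inner_diff_right)
qed

section \<open>Semiconcave functions at a point with a tangent half-space\<close>

locale semiconcave_at_tangent_halfspace =
  fixes K :: "'a::euclidean_space set" and u :: "'a \<Rightarrow> real" and \<omega> :: "real \<Rightarrow> real"
    and L :: real and x \<nu> :: 'a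
  assumes lipschitz: "L-lipschitz_on K u"
    and modulus: "modulus \<omega>"
    and semiconcave: "semiconcave_with K \<omega> u"
    and tangent: "tangent_halfspace_at K x \<nu>"
begin

definition inward_cone :: "'a set" where
  "inward_cone = {w. inner \<nu> w < 0}"

lemma norm_normal: "norm \<nu> = 1"
  using tangent by (simp add: tangent_halfspace_at_def)

lemma inner_normal_normal: "inner \<nu> \<nu> = 1"
  using norm_normal by (simp flip: power2_norm_eq_inner)

lemma x_in_K: "x \<in> K"
proof -
  obtain \<rho> where "\<rho> > 0" and "trunc_cone x \<nu> 1 \<rho> \<subseteq> K"
    by (rule tangent_halfspace_at_trunc_cone[OF tangent zero_less_one])
  moreover have "x \<in> trunc_cone x \<nu> 1 \<rho>"
    using \<open>\<rho> > 0\<close> by (simp add: trunc_cone_def)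
  ultimately show ?thesis by blast
qed

lemma inward_cone_margin:
  assumes "w \<in> inward_cone"
  obtains \<epsilon> where "\<epsilon> > 0" and "inner \<nu> w + \<epsilon> * norm w \<le> 0"
proof
  have "inner \<nu> w < 0" using assms by (simp add: inward_cone_def)
  then have "w \<noteq> 0" by auto
  then show "- inner \<nu> w / norm w > 0"
    using \<open>inner \<nu> w < 0\<close> by (simp add: divide_neg_pos)
  show "inner \<nu> w + - inner \<nu> w / norm w * norm w \<le> 0"
    using \<open>w \<noteq> 0\<close> by simp
qed

lemma margin_mono:
  assumes "inner \<nu> w + \<epsilon> * norm w \<le> 0" and "\<epsilon>' \<le> \<epsilon>"
  shows "inner \<nu> w + \<epsilon>' * norm w \<le> 0"
  using assms mult_right_mono[OF \<open>\<epsilon>' \<le> \<epsilon>\<close> norm_ge_zero[of w]] by linarith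

lemma segment_in_K_eventually:
  assumes "\<epsilon> > 0" and "inner \<nu> w1 + \<epsilon> * norm w1 \<le> 0" and "inner \<nu> w2 + \<epsilon> * norm w2 \<le> 0"
  shows "\<forall>\<^sub>F h in at_right 0. closed_segment (x + h *\<^sub>R w1) (x + h *\<^sub>R w2) \<subseteq> K"
proof -
  obtain \<rho> where "\<rho> > 0" and "trunc_cone x \<nu> \<epsilon> \<rho> \<subseteq> K"
    by (rule tangent_halfspace_at_trunc_cone[OF tangent \<open>\<epsilon> > 0\<close>])
  define M where "M = \<rho> / (1 + norm w1 + norm w2)"
  have pos: "0 < 1 + norm w1 + norm w2" by (simp add: add_pos_nonneg)
  then have "M > 0" using \<open>\<rho> > 0\<close> by (simp add: M_def)
  have seg: "closed_segment (x + h *\<^sub>R w1) (x + h *\<^sub>R w2) \<subseteq> K" if "0 < h" "h < M" for h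
  proof -
    have "h * (1 + norm w1 + norm w2) < \<rho>"
      using that pos by (simp add: M_def less_divide_eq)
    moreover have "h * norm w1 \<le> h * (1 + norm w1 + norm w2)" "h * norm w2 \<le> h * (1 + norm w1 + norm w2)"
      using that by (intro mult_left_mono; simp)+
    ultimately have "h * norm w1 < \<rho>" "h * norm w2 < \<rho>"
      by linarith+
    then have "closed_segment (x + h *\<^sub>R w1) (x + h *\<^sub>R w2) \<subseteq> trunc_cone x \<nu> \<epsilon> \<rho>"
      using assms that by (intro closed_segment_in_trunc_cone) auto
    then show ?thesis
      using \<open>trunc_cone x \<nu> \<epsilon> \<rho> \<subseteq> K\<close> by (rule order_trans)
  qed
  show ?thesis
    by (rule eventually_mono[OF eventually_at_right_real[OF \<open>M > 0\<close>]]) (simp add: seg)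
qed

lemma eventually_in_K:
  assumes "w \<in> inward_cone"
  shows "\<forall>\<^sub>F h in at_right 0. x + h *\<^sub>R w \<in> K"
proof -
  obtain \<epsilon> where "\<epsilon> > 0" and margin: "inner \<nu> w + \<epsilon> * norm w \<le> 0"
    by (rule inward_cone_margin[OF assms])
  show ?thesis
    by (rule eventually_mono[OF segment_in_K_eventually[OF \<open>\<epsilon> > 0\<close> margin margin]]) simp
qed

lemma tendsto_dir_deriv:
  assumes "w \<in> inward_cone"
  shows "((\<lambda>h. diff_quot u x h w) \<longlongrightarrow> dir_deriv u x w) (at_right 0)"
proof -
  obtain \<epsilon> where "\<epsilon> > 0" and "inner \<nu> w + \<epsilon> * norm w \<le> 0"
    by (rule inward_cone_margin[OF assms])
  then have "\<forall>\<^sub>F h in at_right 0. closed_segment x (x + h *\<^sub>R w) \<subseteq> K"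
    using segment_in_K_eventually[of \<epsilon> 0 w] by simp
  then obtain h0 where "h0 > 0" and "closed_segment x (x + h0 *\<^sub>R w) \<subseteq> K"
    unfolding eventually_at_right_field by (metis field_lbound_gt_zero)
  then show ?thesis
    by (rule semiconcave_dir_deriv(1)[OF lipschitz modulus semiconcave])
qed

lemma lipschitz_on_dir_deriv: "L-lipschitz_on inward_cone (dir_deriv u x)"
proof (rule lipschitz_onI)
  show "0 \<le> L" by (rule lipschitz_on_nonneg[OF lipschitz])
  fix v w assume "v \<in> inward_cone" "w \<in> inward_cone"
  have "\<forall>\<^sub>F h in at_right 0. \<bar>diff_quot u x h v - diff_quot u x h w\<bar> \<le> L * norm (v - w)"
    using eventually_in_K[OF \<open>v \<in> inward_cone\<close>] eventually_in_K[OF \<open>w \<in> inward_cone\<close>]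
      eventually_at_right_less[of 0]
    by eventually_elim (auto intro: diff_quot_lipschitz[OF lipschitz])
  then show "dist (dir_deriv u x v) (dir_deriv u x w) \<le> L * dist v w"
    using tendsto_upperbound[OF tendsto_rabs[OF tendsto_diff[OF tendsto_dir_deriv tendsto_dir_deriv]]]
      \<open>v \<in> inward_cone\<close> \<open>w \<in> inward_cone\<close> by (simp add: dist_real_def dist_norm)
qed

lemma dir_deriv_bound:
  assumes "w \<in> inward_cone"
  shows "\<bar>dir_deriv u x w\<bar> \<le> L * norm w"
proof -
  have "\<forall>\<^sub>F h in at_right 0. \<bar>diff_quot u x h w\<bar> \<le> L * norm w"
    using eventually_in_K[OF assms] eventually_at_right_less[of 0]
    by eventually_elim (auto intro: diff_quot_bound[OF lipschitz _ x_in_K])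
  then show ?thesis
    using tendsto_upperbound[OF tendsto_rabs[OF tendsto_dir_deriv[OF assms]]] by simp
qed

lemma dir_deriv_scaleR:
  assumes "w \<in> inward_cone" and "c > 0"
  shows "c *\<^sub>R w \<in> inward_cone" and "dir_deriv u x (c *\<^sub>R w) = c * dir_deriv u x w"
  using assms dir_deriv_eqI[OF tendsto_diff_quot_scaleR[OF tendsto_dir_deriv]]
  by (auto simp: inward_cone_def mult_pos_neg)

lemma concave_on_dir_deriv: "concave_on inward_cone (dir_deriv u x)"
  unfolding concave_on_iff
proof (intro conjI ballI allI impI)
  show "convex inward_cone"
    by (simp add: inward_cone_def convex_halfspace_lt)
  fix w1 w2 and a b :: real
  assume w: "w1 \<in> inward_cone" "w2 \<in> inward_cone" and "0 \<le> a" "0 \<le> b" "a + b = 1"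
  then have b: "b = 1 - a" and "a \<le> 1" by simp_all
  define w where "w = a *\<^sub>R w1 + (1 - a) *\<^sub>R w2"
  have "w \<in> inward_cone"
    using \<open>convex inward_cone\<close> w \<open>0 \<le> a\<close> \<open>a \<le> 1\<close> by (simp add: convex_def w_def)
  obtain \<epsilon>1 where "\<epsilon>1 > 0" and \<epsilon>1: "inner \<nu> w1 + \<epsilon>1 * norm w1 \<le> 0"
    by (rule inward_cone_margin[OF w(1)])
  obtain \<epsilon>2 where "\<epsilon>2 > 0" and \<epsilon>2: "inner \<nu> w2 + \<epsilon>2 * norm w2 \<le> 0"
    by (rule inward_cone_margin[OF w(2)])
  have "\<forall>\<^sub>F h in at_right 0. closed_segment (x + h *\<^sub>R w1) (x + h *\<^sub>R w2) \<subseteq> K"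
    using \<open>\<epsilon>1 > 0\<close> \<open>\<epsilon>2 > 0\<close>
    by (intro segment_in_K_eventually[of "min \<epsilon>1 \<epsilon>2"] margin_mono[OF \<epsilon>1] margin_mono[OF \<epsilon>2]) simp_all
  then have "\<forall>\<^sub>F h in at_right 0. a * diff_quot u x h w1 + (1 - a) * diff_quot u x h w2
      - diff_quot u x h w \<le> norm (w1 - w2) * \<omega> (h * norm (w1 - w2))"
    using eventually_at_right_less[of 0] unfolding w_def
    by eventually_elim (rule semiconcave_diff_quot_concave[OF semiconcave modulus _ _ \<open>0 \<le> a\<close> \<open>a \<le> 1\<close>])
  moreover have "((\<lambda>h. a * diff_quot u x h w1 + (1 - a) * diff_quot u x h w2 - diff_quot u x h w)
      \<longlongrightarrow> a * dir_deriv u x w1 + (1 - a) * dir_deriv u x w2 - dir_deriv u x w) (at_right 0)"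
    using w \<open>w \<in> inward_cone\<close> by (intro tendsto_intros tendsto_dir_deriv)
  ultimately have "a * dir_deriv u x w1 + (1 - a) * dir_deriv u x w2 - dir_deriv u x w \<le> 0"
    by (rule tendsto_le[OF trivial_limit_at_right_real modulus_scaled_tendsto_0[OF modulus norm_ge_zero], rotated])
  then show "a * dir_deriv u x w1 + b * dir_deriv u x w2 \<le> dir_deriv u x (a *\<^sub>R w1 + b *\<^sub>R w2)"
    by (simp add: b w_def)
qed

definition ext_deriv :: "'a \<Rightarrow> real" where
  "ext_deriv = mcshane_ext L (dir_deriv u x) inward_cone"

lemma inward_cone_nonempty: "inward_cone \<noteq> {}"
proof -
  have "- \<nu> \<in> inward_cone" by (simp add: inward_cone_def inner_normal_normal)
  then show ?thesis by blast
qed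

lemmas ext_deriv_ge = mcshane_ext_ge[OF lipschitz_on_dir_deriv inward_cone_nonempty, folded ext_deriv_def]
lemmas ext_deriv_eq = mcshane_ext_eq[OF lipschitz_on_dir_deriv inward_cone_nonempty, folded ext_deriv_def]

lemma lipschitz_on_ext_deriv: "L-lipschitz_on UNIV ext_deriv"
  unfolding ext_deriv_def by (rule lipschitz_on_mcshane_ext[OF lipschitz_on_dir_deriv inward_cone_nonempty])

lemma ext_deriv_at_0: "0 \<le> ext_deriv 0"
proof (rule field_le_epsilon)
  fix e :: real assume "e > 0"
  obtain k where "k > 0" and k: "k * (2 * L) \<le> e"
    using exists_small_factor[of "2 * L" e] lipschitz_on_nonneg[OF lipschitz] \<open>e > 0\<close> by auto
  then have w: "- (k *\<^sub>R \<nu>) \<in> inward_cone"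
    by (simp add: inward_cone_def inner_normal_normal)
  have "- (k * (2 * L)) \<le> dir_deriv u x (- (k *\<^sub>R \<nu>)) - L * norm (0 - - (k *\<^sub>R \<nu>))"
    using dir_deriv_bound[OF w] \<open>k > 0\<close> inner_normal_normal by (simp add: norm_normal abs_le_iff)
  also have "\<dots> \<le> ext_deriv 0"
    by (rule ext_deriv_ge[OF w])
  finally have "- (k * (2 * L)) \<le> ext_deriv 0" .
  with k show "0 \<le> ext_deriv 0 + e" by linarith
qed

lemma exists_linear_majorant:
  obtains p where "inner p \<theta> = ext_deriv \<theta>" and "\<And>w. w \<in> inward_cone \<Longrightarrow> dir_deriv u x w \<le> inner p w"
proof -
  have "concave_on UNIV ext_deriv"
    unfolding ext_deriv_def
    by (rule concave_on_mcshane_ext[OF lipschitz_on_dir_deriv inward_cone_nonempty concave_on_dir_deriv])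
  moreover have "2 * ext_deriv \<theta> \<le> ext_deriv (2 *\<^sub>R \<theta>)"
    unfolding ext_deriv_def using dir_deriv_scaleR[of _ 2]
    by (intro mcshane_ext_scaleR[OF lipschitz_on_dir_deriv inward_cone_nonempty]) auto
  ultimately obtain p where "inner p \<theta> = ext_deriv \<theta>" and "\<And>w. ext_deriv w \<le> inner p w"
    using concave_linear_majorant_at ext_deriv_at_0 by metis
  then show ?thesis
    using that ext_deriv_eq by metis
qed

lemma diff_quot_le_dir_deriv_uniform:
  assumes "\<epsilon> > 0" and "R > 0" and "e > 0"
  obtains \<delta> where "\<delta> > 0"
    and "\<And>h w. 0 < h \<Longrightarrow> h < \<delta> \<Longrightarrow> norm w \<le> R \<Longrightarrow> inner \<nu> w + \<epsilon> * norm w \<le> 0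
      \<Longrightarrow> x + h *\<^sub>R w \<in> K \<and> diff_quot u x h w \<le> dir_deriv u x w + e"
proof -
  obtain \<rho> where "\<rho> > 0" and "trunc_cone x \<nu> \<epsilon> \<rho> \<subseteq> K"
    by (rule tangent_halfspace_at_trunc_cone[OF tangent \<open>\<epsilon> > 0\<close>])
  obtain \<delta>0 where "\<delta>0 > 0"
    and small: "\<And>h (w :: 'a). 0 < h \<Longrightarrow> h < \<delta>0 \<Longrightarrow> norm w \<le> R \<Longrightarrow> norm w * \<omega> (h * norm w) \<le> e"
    using modulus_uniformly_small[OF modulus \<open>R > 0\<close> \<open>e > 0\<close>] by blast
  define \<delta> where "\<delta> = min \<delta>0 (\<rho> / R)"
  have "\<delta> > 0" using \<open>\<delta>0 > 0\<close> \<open>\<rho> > 0\<close> \<open>R > 0\<close> by (simp add: \<delta>_def)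
  moreover have "x + h *\<^sub>R w \<in> K \<and> diff_quot u x h w \<le> dir_deriv u x w + e"
    if "0 < h" "h < \<delta>" "norm w \<le> R" "inner \<nu> w + \<epsilon> * norm w \<le> 0" for h w
  proof -
    have "h * norm w \<le> h * R" using that by (simp add: mult_left_mono)
    also have "h * R < \<rho>" using that \<open>R > 0\<close> by (simp add: \<delta>_def less_divide_eq)
    finally have "closed_segment (x + h *\<^sub>R 0) (x + h *\<^sub>R w) \<subseteq> trunc_cone x \<nu> \<epsilon> \<rho>"
      using that \<open>\<epsilon> > 0\<close> \<open>\<rho> > 0\<close> by (intro closed_segment_in_trunc_cone) auto
    then have "closed_segment x (x + h *\<^sub>R w) \<subseteq> trunc_cone x \<nu> \<epsilon> \<rho>"
      by simp
    then have seg: "closed_segment x (x + h *\<^sub>R w) \<subseteq> K"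
      using \<open>trunc_cone x \<nu> \<epsilon> \<rho> \<subseteq> K\<close> by (rule order_trans)
    have "diff_quot u x h w - norm w * \<omega> (h * norm w) \<le> dir_deriv u x w"
      by (rule semiconcave_dir_deriv(2)[OF lipschitz modulus semiconcave \<open>0 < h\<close> seg \<open>0 < h\<close> order_refl])
    moreover have "norm w * \<omega> (h * norm w) \<le> e"
      using that by (intro small) (auto simp: \<delta>_def)
    ultimately show ?thesis
      using seg by auto
  qed
  ultimately show ?thesis using that by blast
qed

lemma tilted_direction:
  assumes "y \<noteq> x" and "inner \<nu> (y - x) \<le> \<kappa> / 4 * norm (y - x)" and "0 < \<kappa>" and "\<kappa> \<le> 1"
    and w: "w = (1 / norm (y - x)) *\<^sub>R (y - x) - \<kappa> *\<^sub>R \<nu>"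
  shows "y = x + norm (y - x) *\<^sub>R w + (norm (y - x) * \<kappa>) *\<^sub>R \<nu>"
    and "w \<in> inward_cone" and "norm w \<le> 2" and "inner \<nu> w + \<kappa> / 4 * norm w \<le> 0"
proof -
  define h where "h = norm (y - x)"
  have "h > 0" using \<open>y \<noteq> x\<close> by (simp add: h_def)
  then show "y = x + norm (y - x) *\<^sub>R w + (norm (y - x) * \<kappa>) *\<^sub>R \<nu>"
    by (simp add: w h_def[symmetric] algebra_simps)
  have "inner \<nu> (y - x) \<le> \<kappa> / 4 * h"
    using assms(2) by (simp add: h_def)
  then have "inner \<nu> (y - x) / h \<le> \<kappa> / 4"
    by (simp only: pos_divide_le_eq[OF \<open>h > 0\<close>])
  moreover have "inner \<nu> w = inner \<nu> (y - x) / h - \<kappa>"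
    using inner_normal_normal by (simp add: w h_def inner_diff_right)
  ultimately have inner_w: "inner \<nu> w \<le> \<kappa> / 4 - \<kappa>"
    by linarith
  then show "w \<in> inward_cone"
    using \<open>\<kappa> > 0\<close> by (simp add: inward_cone_def)
  have "norm w \<le> 1 + \<kappa>"
    using norm_triangle_ineq4[of "(1 / h) *\<^sub>R (y - x)" "\<kappa> *\<^sub>R \<nu>"] \<open>h > 0\<close> \<open>\<kappa> > 0\<close>
    by (simp add: w h_def norm_normal)
  then show "norm w \<le> 2"
    using \<open>\<kappa> \<le> 1\<close> by linarith
  then have "\<kappa> / 4 * norm w \<le> \<kappa> / 4 * 2"
    using \<open>\<kappa> > 0\<close> by (intro mult_left_mono) auto
  then show "inner \<nu> w + \<kappa> / 4 * norm w \<le> 0"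
    using inner_w \<open>\<kappa> > 0\<close> by linarith
qed

lemma increment_le_diff_quot:
  assumes "y \<in> K" and "x + h *\<^sub>R w \<in> K" and "h > 0" and "\<kappa> \<ge> 0"
    and y: "y = x + h *\<^sub>R w + (h * \<kappa>) *\<^sub>R \<nu>"
  shows "u y - u x - inner p (y - x) \<le> h * (diff_quot u x h w - inner p w) + h * \<kappa> * (L + norm p)"
proof -
  have "u y - u (x + h *\<^sub>R w) \<le> L * (h * \<kappa>)"
    using lipschitz_onD[OF lipschitz assms(1,2)] \<open>h > 0\<close> \<open>\<kappa> \<ge> 0\<close>
    by (simp add: y dist_norm dist_real_def norm_normal)
  moreover have "u (x + h *\<^sub>R w) - u x = h * diff_quot u x h w"
    using \<open>h > 0\<close> by (simp add: diff_quot_mult)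
  moreover have "inner p (y - x) = h * inner p w + h * \<kappa> * inner p \<nu>"
    by (simp add: y inner_add_right)
  moreover have "- inner p \<nu> \<le> norm p"
    using norm_cauchy_schwarz[of p "- \<nu>"] by (simp add: norm_normal)
  then have "- (h * \<kappa> * inner p \<nu>) \<le> h * \<kappa> * norm p"
    using mult_left_mono[of "- inner p \<nu>" "norm p" "h * \<kappa>"] \<open>h > 0\<close> \<open>\<kappa> \<ge> 0\<close> by simp
  ultimately show ?thesis
    by (simp add: algebra_simps)
qed

lemma superdiff_if_dir_deriv_le:
  assumes le: "\<And>w. w \<in> inward_cone \<Longrightarrow> dir_deriv u x w \<le> inner p w"
  shows "p \<in> superdiff K u x"
proof (rule superdiffI)
  fix \<eta> :: real assume "\<eta> > 0"
  obtain \<kappa> where "\<kappa> > 0" "\<kappa> \<le> 1" and \<kappa>: "\<kappa> * (L + norm p) \<le> \<eta> / 2"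
    using exists_small_factor[of "L + norm p" "\<eta> / 2"] lipschitz_on_nonneg[OF lipschitz] \<open>\<eta> > 0\<close>
    by (metis add_nonneg_nonneg half_gt_zero norm_ge_zero)
  obtain \<delta> where "\<delta> > 0" and unif: "\<And>h w. 0 < h \<Longrightarrow> h < \<delta> \<Longrightarrow> norm w \<le> 2
      \<Longrightarrow> inner \<nu> w + \<kappa> / 4 * norm w \<le> 0 \<Longrightarrow> x + h *\<^sub>R w \<in> K \<and> diff_quot u x h w \<le> dir_deriv u x w + \<eta> / 2"
    using diff_quot_le_dir_deriv_uniform[of "\<kappa> / 4" 2 "\<eta> / 2"] \<open>\<kappa> > 0\<close> \<open>\<eta> > 0\<close> by auto
  obtain \<rho> where "\<rho> > 0"
    and flat: "\<And>y. y \<in> K \<Longrightarrow> norm (y - x) < \<rho> \<Longrightarrow> inner \<nu> (y - x) \<le> \<kappa> / 4 * norm (y - x)"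
    using tangent_halfspace_at_flat[OF tangent, of "\<kappa> / 4"] \<open>\<kappa> > 0\<close> by auto
  \<comment> \<open>Split \<open>y - x = h w + h\<kappa>\<nu>\<close> with \<open>w\<close> in a fixed inward cone: the uniform estimate controls
    the quotient along \<open>w\<close>, Lipschitz continuity the small tilt \<open>h\<kappa>\<nu>\<close>.\<close>
  have "u y - u x - inner p (y - x) \<le> \<eta> * norm (y - x)"
    if "y \<in> K" "y \<noteq> x" and y: "norm (y - x) < min \<delta> \<rho>" for y
  proof -
    define h where "h = norm (y - x)"
    define w where "w = (1 / h) *\<^sub>R (y - x) - \<kappa> *\<^sub>R \<nu>"
    have "h > 0" using \<open>y \<noteq> x\<close> by (simp add: h_def)
    have "norm (y - x) < \<rho>" using y by simp
    note w = tilted_direction[OF \<open>y \<noteq> x\<close> flat[OF \<open>y \<in> K\<close> this] \<open>\<kappa> > 0\<close> \<open>\<kappa> \<le> 1\<close>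
        w_def[unfolded h_def], folded h_def]
    have "x + h *\<^sub>R w \<in> K" and quot: "diff_quot u x h w \<le> inner p w + \<eta> / 2"
      using unif[OF \<open>h > 0\<close> _ w(3,4)] le[OF w(2)] y by (auto simp: h_def)
    then have "u y - u x - inner p (y - x) \<le> h * (diff_quot u x h w - inner p w) + h * \<kappa> * (L + norm p)"
      using \<open>y \<in> K\<close> \<open>h > 0\<close> \<open>\<kappa> > 0\<close> w(1) by (intro increment_le_diff_quot) auto
    moreover have "h * (diff_quot u x h w - inner p w) \<le> h * (\<eta> / 2)"
      using quot \<open>h > 0\<close> by (intro mult_left_mono) auto
    moreover have "h * \<kappa> * (L + norm p) \<le> h * (\<eta> / 2)"
      using mult_left_mono[OF \<kappa>, of h] \<open>h > 0\<close> by (simp add: mult.assoc)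
    ultimately have "u y - u x - inner p (y - x) \<le> h * (\<eta> / 2) + h * (\<eta> / 2)"
      by linarith
    then show ?thesis
      by (simp add: h_def)
  qed
  then show "\<exists>\<delta>>0. \<forall>y\<in>K. norm (y - x) < \<delta> \<longrightarrow> u y - u x - inner p (y - x) \<le> \<eta> * norm (y - x)"
    using \<open>\<delta> > 0\<close> \<open>\<rho> > 0\<close> by (intro exI[of _ "min \<delta> \<rho>"]) force
qed

lemma dini_lower_ge_ext_deriv:
  assumes "inner \<nu> \<theta> \<le> 0"
  shows "ereal (ext_deriv \<theta>) \<le> dini_lower K u x \<theta>"
  unfolding dini_lower_diff_quot
proof (rule ereal_le_Liminf_eventually)
  fix e :: real assume "e > 0"
  have "0 \<le> L" by (rule lipschitz_on_nonneg[OF lipschitz])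
  obtain k where "k > 0" and Lk: "k * L \<le> e / 4"
    using exists_small_factor[of L "e / 4"] \<open>0 \<le> L\<close> \<open>e > 0\<close> by auto
  define w where "w = \<theta> - k *\<^sub>R \<nu>"
  have "w \<in> inward_cone"
    using assms \<open>k > 0\<close> inner_normal_normal by (simp add: w_def inward_cone_def inner_diff_right)
  have "ext_deriv \<theta> \<le> dir_deriv u x w + k * L"
    using lipschitz_onD[OF lipschitz_on_ext_deriv, of \<theta> w] ext_deriv_eq[OF \<open>w \<in> inward_cone\<close>]
      \<open>k > 0\<close> inner_normal_normal
    by (simp add: w_def dist_real_def dist_norm norm_normal abs_le_iff mult.commute)
  show "\<forall>\<^sub>F z in dini_filter K x \<theta>. ext_deriv \<theta> - e < diff_quot u x (fst z) (snd z)"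
  proof (rule eventually_dini_filterI)
    have "\<forall>\<^sub>F h in at_right 0. dist (diff_quot u x h w) (dir_deriv u x w) < e / 4"
      by (rule tendstoD[OF tendsto_dir_deriv[OF \<open>w \<in> inward_cone\<close>]]) (use \<open>e > 0\<close> in simp)
    then show "\<forall>\<^sub>F h in at_right 0. 0 < h \<and> dist (diff_quot u x h w) (dir_deriv u x w) < e / 4 \<and> x + h *\<^sub>R w \<in> K"
      using eventually_at_right_less[of 0] eventually_in_K[OF \<open>w \<in> inward_cone\<close>]
      by eventually_elim auto
    show "\<forall>\<^sub>F t in nhds \<theta>. dist t \<theta> < k"
      using \<open>k > 0\<close> unfolding eventually_nhds_metric by blast
  next
    fix h t assume h: "0 < h \<and> dist (diff_quot u x h w) (dir_deriv u x w) < e / 4 \<and> x + h *\<^sub>R w \<in> K"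
      and "dist t \<theta> < k" and "x + h *\<^sub>R t \<in> K"
    have "norm (t - w) \<le> 2 * k"
      using norm_triangle_ineq[of "t - \<theta>" "k *\<^sub>R \<nu>"] \<open>dist t \<theta> < k\<close> \<open>k > 0\<close> inner_normal_normal
      by (simp add: w_def dist_norm norm_normal algebra_simps)
    then have "L * norm (t - w) \<le> 2 * (k * L)"
      using \<open>0 \<le> L\<close> mult_left_mono[of "norm (t - w)" "2 * k" L] by (simp add: mult_ac)
    then have "diff_quot u x h w - 2 * (k * L) \<le> diff_quot u x h t"
      using diff_quot_lipschitz[OF lipschitz _ \<open>x + h *\<^sub>R t \<in> K\<close>, of w] h by (simp add: abs_le_iff)
    moreover have "dir_deriv u x w - e / 4 < diff_quot u x h w"
      using h unfolding dist_real_def abs_diff_less_iff by auto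
    ultimately show "ext_deriv \<theta> - e < diff_quot u x h t"
      using \<open>ext_deriv \<theta> \<le> dir_deriv u x w + k * L\<close> Lk by linarith
  qed
qed

lemma dini_filter_nontrivial:
  assumes "inner \<nu> \<theta> \<le> 0"
  shows "dini_filter K x \<theta> \<noteq> bot"
proof
  assume "dini_filter K x \<theta> = bot"
  then have "\<forall>\<^sub>F z in dini_filter K x \<theta>. False"
    by simp
  then have "\<forall>\<^sub>F z in at_right 0 \<times>\<^sub>F nhds \<theta>. x + fst z *\<^sub>R snd z \<notin> K"
    unfolding dini_filter_def eventually_inf_principal by (simp add: case_prod_unfold)
  then obtain P Q where "eventually P (at_right 0)" and "eventually Q (nhds \<theta>)"
    and PQ: "\<And>h t. P h \<Longrightarrow> Q t \<Longrightarrow> x + h *\<^sub>R t \<notin> K"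
    unfolding eventually_prod_filter by auto
  obtain r where "r > 0" and r: "\<And>t. dist t \<theta> < r \<Longrightarrow> Q t"
    using \<open>eventually Q (nhds \<theta>)\<close> unfolding eventually_nhds_metric by blast
  define w where "w = \<theta> - (r / 2) *\<^sub>R \<nu>"
  have "w \<in> inward_cone"
    using assms \<open>r > 0\<close> inner_normal_normal by (simp add: w_def inward_cone_def inner_diff_right)
  have "Q w"
    using \<open>r > 0\<close> inner_normal_normal by (intro r) (simp add: w_def dist_norm norm_normal)
  have "\<forall>\<^sub>F h in at_right 0. P h \<and> x + h *\<^sub>R w \<in> K"
    using \<open>eventually P (at_right 0)\<close> eventually_in_K[OF \<open>w \<in> inward_cone\<close>] by (rule eventually_conj)
  then obtain h where "P h" "x + h *\<^sub>R w \<in> K"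
    using eventually_happens'[OF trivial_limit_at_right_real] by blast
  then show False using PQ \<open>Q w\<close> by blast
qed

theorem dini_derivatives_eq_min_superdiff:
  assumes "inner \<nu> \<theta> \<le> 0"
  shows "(\<exists>p\<in>superdiff K u x. \<forall>q\<in>superdiff K u x. inner p \<theta> \<le> inner q \<theta>)
    \<and> dini_upper K u x \<theta> = ereal (INF p\<in>superdiff K u x. inner p \<theta>)
    \<and> dini_lower K u x \<theta> = ereal (INF p\<in>superdiff K u x. inner p \<theta>)"
proof -
  obtain p where p: "inner p \<theta> = ext_deriv \<theta>" "\<And>w. w \<in> inward_cone \<Longrightarrow> dir_deriv u x w \<le> inner p w"
    using exists_linear_majorant[of \<theta>] by metis
  have "p \<in> superdiff K u x" by (rule superdiff_if_dir_deriv_le[OF p(2)])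
  have lower: "ereal (inner p \<theta>) \<le> dini_lower K u x \<theta>"
    using dini_lower_ge_ext_deriv[OF assms] p(1) by simp
  have lower_upper: "dini_lower K u x \<theta> \<le> dini_upper K u x \<theta>"
    unfolding dini_lower_def dini_upper_def by (rule Liminf_le_Limsup[OF dini_filter_nontrivial[OF assms]])
  have upper: "dini_upper K u x \<theta> \<le> ereal (inner q \<theta>)" if "q \<in> superdiff K u x" for q
    by (rule dini_upper_le_superdiff[OF that])
  have min: "\<forall>q\<in>superdiff K u x. inner p \<theta> \<le> inner q \<theta>"
    using lower lower_upper upper by (meson ereal_less_eq(3) order_trans)
  then have "(INF q\<in>superdiff K u x. inner q \<theta>) = inner p \<theta>"
    using \<open>p \<in> superdiff K u x\<close> by (intro cInf_eq_minimum) auto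
  then show ?thesis
    using \<open>p \<in> superdiff K u x\<close> min lower lower_upper upper[OF \<open>p \<in> superdiff K u x\<close>] by auto
qed

end

theorem lemma2p11:
  fixes \<Omega> :: "'a::euclidean_space set" and u :: "'a \<Rightarrow> real" and \<omega> :: "real \<Rightarrow> real"
    and x \<nu> \<theta> :: 'a and L :: real
  assumes "open \<Omega>" and "bounded \<Omega>" and "C2_boundary \<Omega>"
    and "L-lipschitz_on (closure \<Omega>) u"
    and "modulus \<omega>" and "semiconcave_with (closure \<Omega>) \<omega> u"
    and "x \<in> frontier \<Omega>" and "outward_unit_normal \<Omega> x \<nu>"
    and "inner \<theta> \<nu> \<le> 0"
  shows "(\<exists>p\<in>superdiff (closure \<Omega>) u x. \<forall>q\<in>superdiff (closure \<Omega>) u x. inner p \<theta> \<le> inner q \<theta>)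
    \<and> dini_upper (closure \<Omega>) u x \<theta> = ereal (INF p\<in>superdiff (closure \<Omega>) u x. inner p \<theta>)
    \<and> dini_lower (closure \<Omega>) u x \<theta> = ereal (INF p\<in>superdiff (closure \<Omega>) u x. inner p \<theta>)"
proof -
  have "tangent_halfspace_at (closure \<Omega>) x \<nu>"
    using assms(1,7,8) by (rule tangent_halfspace_at_outward_normal)
  then interpret semiconcave_at_tangent_halfspace "closure \<Omega>" u \<omega> L x \<nu>
    using assms(4-6) by (intro semiconcave_at_tangent_halfspace.intro)
  have "inner \<nu> \<theta> \<le> 0"
    using assms(9) by (simp add: inner_commute)
  then show ?thesis
    by (rule dini_derivatives_eq_min_superdiff)
qed

end
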